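(* Assume $\bar p=\mu\cdot\mathbf p=1/2$. There exist constants $C,C'>0$ and $y_0<\infty$ such that for all $n\ge1$, all $y\ge y_0$ and every initial distribution $\eta$ on $\mathcal R$, $$P_\eta\Big(\Big|\sum_{j=1}^n(\tilde G_j-1)\Big|>y\Big)\le C\Big(\exp\Big\{-C'\frac{y^2}{y\vee 8n}\Big\}+\exp\{-C'y\}\Big).$$
   Context: Let $\mathcal R=\{1,\dots,N\}$ and let $K$ be a stochastic matrix on $\mathcal R$ whose Markov chain has a unique closed irreducible subset; let $\mu$ (row vector) be its unique stationary distribution. Fix $p:\mathcal R\to(0,1)$, $\mathbf p=(p(1),\dots,p(N))^t$. Under $P_\eta$, $(R_j)_{j\ge1}$ is a Markov chain with transition matrix $K$ and $R_1\sim\eta$, and given $(R_j)$ the $\xi(j)$ are independent Bernoulli$(p(R_j))$. Let $F_m=\inf\{k\ge0:\sum_{j=1}^{k+m}\xi(j)=m\}$ (number of failures before the $m$-th success), $F_0=0$, and $\tilde G_m=F_m-F_{m-1}$ (number of failures between the $(m-1)$-st and $m$-th success). *)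

theory Defs
  imports "HOL-Probability.Probability"
begin

definition stochastic_matrix :: "nat \<Rightarrow> (nat \<Rightarrow> nat \<Rightarrow> real) \<Rightarrow> bool" where
  "stochastic_matrix N K \<longleftrightarrow>
     (\<forall>i\<in>{1..N}. \<forall>j\<in>{1..N}. 0 \<le> K i j) \<and> (\<forall>i\<in>{1..N}. (\<Sum>j\<in>{1..N}. K i j) = 1)"

definition trans_rel :: "nat \<Rightarrow> (nat \<Rightarrow> nat \<Rightarrow> real) \<Rightarrow> (nat \<times> nat) set" where
  "trans_rel N K = {(i, j). i \<in> {1..N} \<and> j \<in> {1..N} \<and> 0 < K i j}"

definition closed_set :: "nat \<Rightarrow> (nat \<Rightarrow> nat \<Rightarrow> real) \<Rightarrow> nat set \<Rightarrow> bool" where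
  "closed_set N K C \<longleftrightarrow> C \<noteq> {} \<and> C \<subseteq> {1..N} \<and>
     (\<forall>i\<in>C. \<forall>j\<in>{1..N}. 0 < K i j \<longrightarrow> j \<in> C)"

definition closed_irreducible :: "nat \<Rightarrow> (nat \<Rightarrow> nat \<Rightarrow> real) \<Rightarrow> nat set \<Rightarrow> bool" where
  "closed_irreducible N K C \<longleftrightarrow> closed_set N K C \<and>
     (\<forall>i\<in>C. \<forall>j\<in>C. (i, j) \<in> (trans_rel N K)\<^sup>*)"

definition unique_closed_irreducible :: "nat \<Rightarrow> (nat \<Rightarrow> nat \<Rightarrow> real) \<Rightarrow> bool" where
  "unique_closed_irreducible N K \<longleftrightarrow> (\<exists>!C. closed_irreducible N K C)"

definition prob_vector :: "nat \<Rightarrow> (nat \<Rightarrow> real) \<Rightarrow> bool" where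
  "prob_vector N v \<longleftrightarrow> (\<forall>i\<in>{1..N}. 0 \<le> v i) \<and> (\<Sum>i\<in>{1..N}. v i) = 1"

definition stationary :: "nat \<Rightarrow> (nat \<Rightarrow> nat \<Rightarrow> real) \<Rightarrow> (nat \<Rightarrow> real) \<Rightarrow> bool" where
  "stationary N K \<mu> \<longleftrightarrow> prob_vector N \<mu> \<and>
     (\<forall>j\<in>{1..N}. (\<Sum>i\<in>{1..N}. \<mu> i * K i j) = \<mu> j)"

text \<open>Sample paths: omega j = (R_j, xi(j)) for j \<ge> 1 (coordinate 0 is unused).
  The law P_eta is specified through its finite-dimensional distributions.\<close>
definition path_law :: "nat \<Rightarrow> (nat \<Rightarrow> nat \<Rightarrow> real) \<Rightarrow> (nat \<Rightarrow> real) \<Rightarrow> (nat \<Rightarrow> real)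
     \<Rightarrow> (nat \<Rightarrow> nat \<times> bool) measure \<Rightarrow> bool" where
  "path_law N K p \<eta> M \<longleftrightarrow> prob_space M \<and>
     (\<forall>j. (\<lambda>\<omega>. \<omega> j) \<in> measurable M (count_space UNIV)) \<and>
     (\<forall>m\<ge>1. \<forall>r b. measure M {\<omega> \<in> space M. \<forall>j\<in>{1..m}. \<omega> j = (r j, b j)} =
        (if (\<forall>j\<in>{1..m}. r j \<in> {1..N}) then
           \<eta> (r 1) * (\<Prod>j\<in>{1..<m}. K (r j) (r (Suc j))) *
           (\<Prod>j\<in>{1..m}. (if b j then p (r j) else 1 - p (r j)))
         else 0))"

text \<open>xi(j) of a path, and F_m = number of failures before the m-th success.\<close>
definition xi :: "(nat \<Rightarrow> nat \<times> bool) \<Rightarrow> nat \<Rightarrow> bool" where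
  "xi \<omega> j = snd (\<omega> j)"

definition F :: "(nat \<Rightarrow> nat \<times> bool) \<Rightarrow> nat \<Rightarrow> nat" where
  "F \<omega> m = (LEAST k. card {j \<in> {1..k + m}. xi \<omega> j} = m)"

definition Gt :: "(nat \<Rightarrow> nat \<times> bool) \<Rightarrow> nat \<Rightarrow> real" where
  "Gt \<omega> m = real (F \<omega> m) - real (F \<omega> (m - 1))"

end

theory Submission
  imports Defs
begin

text \<open>Since \<open>\<Sum>j\<le>n. (G\<^sub>j - 1) = F\<^sub>n - n\<close>, a deviation of \<open>F\<^sub>n\<close> by \<open>y\<close> is a deviation of order
  \<open>y\<close> of the number \<open>S\<^sub>m\<close> of successes among the first \<open>m \<approx> 2n \<plusminus> y\<close> trials from \<open>m/2\<close>, so it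
  suffices to prove a Bernstein-type bound for \<open>S\<^sub>m - m/2\<close>. Its exponential moments are
  controlled by the Lyapunov function \<open>exp (l (h - f))\<close>, where \<open>f = p - 1/2\<close> is centred under
  \<open>\<mu>\<close> (this is \<open>\<mu> \<cdot> p = 1/2\<close>) and \<open>h\<close> is a bounded approximate solution of the Poisson equation
  \<open>h - K h = f\<close>. Such \<open>h\<close> exist because the lazy chain \<open>(I + K)/2\<close> contracts oscillations
  geometrically, all states leading to the unique closed irreducible class. A Chernoff bound
  then yields the Gaussian regime \<open>exp (- C' y\<^sup>2 / n)\<close> and the exponential regime \<open>exp (- C' y)\<close>.\<close>

definition paths :: "'a set \<Rightarrow> nat \<Rightarrow> (nat \<Rightarrow> 'a) set" where
  "paths S m = PiE {1..m} (\<lambda>_. S)"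

definition path_weight :: "('a \<Rightarrow> real) \<Rightarrow> ('a \<Rightarrow> 'a \<Rightarrow> real) \<Rightarrow> ('a \<Rightarrow> real) \<Rightarrow> nat \<Rightarrow> (nat \<Rightarrow> 'a) \<Rightarrow> real" where
  "path_weight a P \<phi> m s = a (s 1) * (\<Prod>j\<in>{1..<m}. P (s j) (s (Suc j))) * (\<Prod>j\<in>{1..m}. \<phi> (s j))"

lemma paths_Suc: "paths S (Suc m) = (\<lambda>(y, g). g(Suc m := y)) ` (S \<times> paths S m)"
  unfolding paths_def by (simp add: atLeastAtMostSuc_conv PiE_insert_eq)

lemma inj_on_paths_extend: "inj_on (\<lambda>(y, g). g(Suc m := y)) (S \<times> paths S m)"
  unfolding paths_def using inj_combinator[of "Suc m" "{1..m}" "\<lambda>_. S"] by simp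

lemma path_weight_extend:
  assumes "m \<ge> 1" "g \<in> paths S m"
  shows "path_weight a P \<phi> (Suc m) (g(Suc m := y)) = path_weight a P \<phi> m g * P (g m) y * \<phi> y"
proof -
  have e1: "{1..<Suc m} = insert m {1..<m}" using assms by auto
  have e2: "{1..Suc m} = insert (Suc m) {1..m}" by auto
  have p1: "(\<Prod>j\<in>{1..<Suc m}. P ((g(Suc m := y)) j) ((g(Suc m := y)) (Suc j)))
      = P (g m) y * (\<Prod>j\<in>{1..<m}. P (g j) (g (Suc j)))"
    unfolding e1 by (subst prod.insert) (auto intro!: prod.cong)
  have p2: "(\<Prod>j\<in>{1..Suc m}. \<phi> ((g(Suc m := y)) j)) = \<phi> y * (\<Prod>j\<in>{1..m}. \<phi> (g j))"
    unfolding e2 by (subst prod.insert) (auto intro!: prod.cong)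
  show ?thesis using assms unfolding path_weight_def p1 p2 by simp
qed

lemma sum_paths_Suc:
  assumes "m \<ge> 1" "finite S"
  shows "(\<Sum>s\<in>paths S (Suc m). path_weight a P \<phi> (Suc m) s * G (s (Suc m)))
       = (\<Sum>s\<in>paths S m. path_weight a P \<phi> m s * (\<Sum>y\<in>S. P (s m) y * \<phi> y * G y))"
proof -
  have "(\<Sum>s\<in>paths S (Suc m). path_weight a P \<phi> (Suc m) s * G (s (Suc m)))
     = (\<Sum>(y,g)\<in>S \<times> paths S m. path_weight a P \<phi> (Suc m) (g(Suc m := y)) * G y)"
    unfolding paths_Suc by (subst sum.reindex[OF inj_on_paths_extend]) (simp add: case_prod_unfold)
  also have "\<dots> = (\<Sum>y\<in>S. \<Sum>g\<in>paths S m. path_weight a P \<phi> m g * P (g m) y * \<phi> y * G y)"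
    by (subst sum.cartesian_product[symmetric]) (auto intro!: sum.cong simp: path_weight_extend[OF assms(1)])
  also have "\<dots> = (\<Sum>g\<in>paths S m. \<Sum>y\<in>S. path_weight a P \<phi> m g * P (g m) y * \<phi> y * G y)"
    by (rule sum.swap)
  also have "\<dots> = (\<Sum>s\<in>paths S m. path_weight a P \<phi> m s * (\<Sum>y\<in>S. P (s m) y * \<phi> y * G y))"
    by (auto simp: sum_distrib_left mult.assoc intro!: sum.cong)
  finally show ?thesis .
qed

lemma sum_paths_one: "(\<Sum>s\<in>paths S 1. path_weight a P \<phi> 1 s * G (s 1)) = (\<Sum>x\<in>S. a x * \<phi> x * G x)"
proof -
  have "paths S 1 = (\<lambda>(y, g). g(1 := y)) ` (S \<times> paths S 0)"
    unfolding paths_def by (simp add: PiE_insert_eq)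
  moreover have "inj_on (\<lambda>(y, g). g(1 := y)) (S \<times> paths S 0)"
    unfolding paths_def by (auto simp: inj_on_def fun_eq_iff)
  ultimately have "(\<Sum>s\<in>paths S 1. path_weight a P \<phi> 1 s * G (s 1)) = (\<Sum>(y,g)\<in>S \<times> paths S 0. path_weight a P \<phi> 1 (g(1:=y)) * G y)"
    by (simp add: sum.reindex case_prod_unfold)
  also have "\<dots> = (\<Sum>x\<in>S. a x * \<phi> x * G x)"
    by (simp add: paths_def path_weight_def sum.cartesian_product[symmetric])
  finally show ?thesis .
qed

lemma finite_paths: "finite S \<Longrightarrow> finite (paths S m)"
  unfolding paths_def by (simp add: finite_PiE)

lemma paths_memD: "s \<in> paths S m \<Longrightarrow> j \<in> {1..m} \<Longrightarrow> s j \<in> S"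
  unfolding paths_def by auto

lemma paths_eqI: "s \<in> paths S m \<Longrightarrow> s' \<in> paths S m \<Longrightarrow> (\<forall>j\<in>{1..m}. s j = s' j) \<Longrightarrow> s = s'"
  unfolding paths_def by (auto intro: PiE_ext)

lemma paths_last: "s \<in> paths S (Suc m) \<Longrightarrow> s (Suc m) \<in> S"
  by (rule paths_memD) auto

lemma path_weight_nonneg:
  assumes "s \<in> paths S m" "\<forall>x\<in>S. a x \<ge> 0" "\<forall>x\<in>S. \<forall>y\<in>S. P x y \<ge> 0" "\<forall>x\<in>S. \<phi> x \<ge> 0" "m \<ge> 1"
  shows "path_weight a P \<phi> m s \<ge> 0"
  using assms unfolding path_weight_def
  by (intro mult_nonneg_nonneg prod_nonneg) (auto simp: paths_memD)

lemma sum_paths_drift_le: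
  assumes S: "finite S" and a: "\<forall>x\<in>S. a x \<ge> 0" and P: "\<forall>x\<in>S. \<forall>y\<in>S. P x y \<ge> 0"
    and ph: "\<forall>x\<in>S. \<phi> x \<ge> 0" and rho: "\<rho> \<ge> 0"
    and ly: "\<forall>x\<in>S. (\<Sum>y\<in>S. P x y * \<phi> y * V y) \<le> \<rho> * V x"
  shows "(\<Sum>s\<in>paths S (Suc m). path_weight a P \<phi> (Suc m) s * V (s (Suc m))) \<le> \<rho>^m * (\<Sum>x\<in>S. a x * \<phi> x * V x)"
proof (induction m)
  case 0
  then show ?case using sum_paths_one[of a P \<phi> V S] by simp
next
  case (Suc m)
  have "(\<Sum>s\<in>paths S (Suc (Suc m)). path_weight a P \<phi> (Suc (Suc m)) s * V (s (Suc (Suc m))))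
      = (\<Sum>s\<in>paths S (Suc m). path_weight a P \<phi> (Suc m) s * (\<Sum>y\<in>S. P (s (Suc m)) y * \<phi> y * V y))"
    by (rule sum_paths_Suc) (use S in auto)
  also have "\<dots> \<le> (\<Sum>s\<in>paths S (Suc m). path_weight a P \<phi> (Suc m) s * (\<rho> * V (s (Suc m))))"
    using ly path_weight_nonneg[OF _ a P ph] paths_last[of _ S m]
    by (intro sum_mono mult_left_mono) auto
  also have "\<dots> = \<rho> * (\<Sum>s\<in>paths S (Suc m). path_weight a P \<phi> (Suc m) s * V (s (Suc m)))"
    by (simp add: sum_distrib_left mult_ac)
  also have "\<dots> \<le> \<rho> * (\<rho>^m * (\<Sum>x\<in>S. a x * \<phi> x * V x))"
    using Suc rho by (rule mult_left_mono)
  finally show ?case by simp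
qed

lemma sum_path_weight_le_drift:
  assumes S: "finite S" and a: "\<forall>x\<in>S. a x \<ge> 0" and P: "\<forall>x\<in>S. \<forall>y\<in>S. P x y \<ge> 0"
    and ph: "\<forall>x\<in>S. \<phi> x \<ge> 0" and rho: "\<rho> \<ge> 0"
    and ly: "\<forall>x\<in>S. (\<Sum>y\<in>S. P x y * \<phi> y * V y) \<le> \<rho> * V x"
    and B: "B \<ge> 0" and V: "\<forall>x\<in>S. 1 \<le> B * V x"
  shows "(\<Sum>s\<in>paths S (Suc m). path_weight a P \<phi> (Suc m) s) \<le> B * (\<rho>^m * (\<Sum>x\<in>S. a x * \<phi> x * V x))"
proof -
  have "path_weight a P \<phi> (Suc m) s \<le> path_weight a P \<phi> (Suc m) s * (B * V (s (Suc m)))"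
    if s: "s \<in> paths S (Suc m)" for s
    using mult_left_mono[OF V[rule_format, OF paths_last[OF s]] path_weight_nonneg[OF s a P ph]]
    by simp
  then have "(\<Sum>s\<in>paths S (Suc m). path_weight a P \<phi> (Suc m) s)
      \<le> B * (\<Sum>s\<in>paths S (Suc m). path_weight a P \<phi> (Suc m) s * V (s (Suc m)))"
    by (simp add: sum_distrib_left mult_ac sum_mono)
  also have "\<dots> \<le> B * (\<rho>^m * (\<Sum>x\<in>S. a x * \<phi> x * V x))"
    using B by (intro mult_left_mono sum_paths_drift_le[OF S a P ph rho ly])
  finally show ?thesis .
qed

lemma sum_path_weight:
  assumes S: "finite S" and ms: "\<forall>x\<in>S. (\<Sum>y\<in>S. P x y * \<phi> y) = 1"
  shows "(\<Sum>s\<in>paths S (Suc m). path_weight a P \<phi> (Suc m) s) = (\<Sum>x\<in>S. a x * \<phi> x)"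
proof (induction m)
  case 0
  then show ?case using sum_paths_one[of a P \<phi> "\<lambda>_. 1" S] by simp
next
  case (Suc m)
  have "(\<Sum>s\<in>paths S (Suc (Suc m)). path_weight a P \<phi> (Suc (Suc m)) s * (\<lambda>_. 1) (s (Suc (Suc m))))
      = (\<Sum>s\<in>paths S (Suc m). path_weight a P \<phi> (Suc m) s * (\<Sum>y\<in>S. P (s (Suc m)) y * \<phi> y * 1))"
    by (rule sum_paths_Suc) (use S in auto)
  also have "\<dots> = (\<Sum>s\<in>paths S (Suc m). path_weight a P \<phi> (Suc m) s)"
    using ms paths_last[of _ S m] by (auto intro!: sum.cong)
  finally show ?case using Suc by simp
qed

lemma trans_relD: "(i,j) \<in> trans_rel N K \<Longrightarrow> i \<in> {1..N} \<and> j \<in> {1..N} \<and> 0 < K i j"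
  unfolding trans_rel_def by auto

lemma closed_set_rtrancl:
  assumes "closed_set N K D" "d \<in> D" "(d, j) \<in> (trans_rel N K)\<^sup>*"
  shows "j \<in> D"
  using assms(3,2)
proof (induction rule: rtrancl_induct)
  case base then show ?case .
next
  case (step y z)
  then show ?case using assms(1) trans_relD[OF step(2)] unfolding closed_set_def by blast
qed

lemma closed_set_reachable:
  assumes "i \<in> {1..N}"
  shows "closed_set N K {j. (i, j) \<in> (trans_rel N K)\<^sup>*}"
proof -
  have sub: "{j. (i, j) \<in> (trans_rel N K)\<^sup>*} \<subseteq> {1..N}"
  proof
    fix j assume "j \<in> {j. (i, j) \<in> (trans_rel N K)\<^sup>*}"
    then have "(i,j) \<in> (trans_rel N K)\<^sup>*" by simp
    then show "j \<in> {1..N}"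
      by (induction rule: rtrancl_induct) (use assms trans_relD in auto)
  qed
  show ?thesis unfolding closed_set_def
  proof (intro conjI ballI impI)
    show "{j. (i, j) \<in> (trans_rel N K)\<^sup>*} \<noteq> {}" by auto
    show "{j. (i, j) \<in> (trans_rel N K)\<^sup>*} \<subseteq> {1..N}" by (rule sub)
    fix a b assume a: "a \<in> {j. (i, j) \<in> (trans_rel N K)\<^sup>*}" and b: "b \<in> {1..N}" and "0 < K a b"
    then have "(a,b) \<in> trans_rel N K" using sub unfolding trans_rel_def by auto
    with a show "b \<in> {j. (i, j) \<in> (trans_rel N K)\<^sup>*}" by auto
  qed
qed

text \<open>A closed subset of minimal cardinality is irreducible, since the states reachable from
  any of its points form a closed subset of it.\<close>

lemma closed_set_contains_irreducible:
  assumes R: "closed_set N K R"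
  obtains D where "D \<subseteq> R" "closed_irreducible N K D"
proof -
  obtain D where D: "closed_set N K D \<and> D \<subseteq> R"
    and Dmin: "\<And>E. closed_set N K E \<and> E \<subseteq> R \<Longrightarrow> card D \<le> card E"
    using ex_has_least_nat[of "\<lambda>D. closed_set N K D \<and> D \<subseteq> R" R card] R by blast
  have finD: "finite D" using D unfolding closed_set_def by (meson finite_atLeastAtMost finite_subset)
  have "closed_irreducible N K D"
    unfolding closed_irreducible_def
  proof (intro conjI ballI)
    show "closed_set N K D" using D by blast
    fix d d' assume d: "d \<in> D" and d': "d' \<in> D"
    define Rd where "Rd = {j. (d, j) \<in> (trans_rel N K)\<^sup>*}"
    have dN: "d \<in> {1..N}" using D d unfolding closed_set_def by blast
    have Rdc: "closed_set N K Rd" unfolding Rd_def by (rule closed_set_reachable[OF dN])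
    have RdD: "Rd \<subseteq> D" unfolding Rd_def using closed_set_rtrancl[of N K D d] D d by blast
    have "card D \<le> card Rd" using Dmin[of Rd] Rdc RdD D by blast
    then have "Rd = D" using RdD finD by (meson card_seteq)
    then show "(d, d') \<in> (trans_rel N K)\<^sup>*" using d' unfolding Rd_def by blast
  qed
  with D show ?thesis using that by blast
qed

lemma common_target_reachable:
  assumes "unique_closed_irreducible N K"
  shows "\<exists>z\<in>{1..N}. \<forall>i\<in>{1..N}. (i,z) \<in> (trans_rel N K)\<^sup>*"
proof -
  obtain C where C: "closed_irreducible N K C" and uniq: "\<And>D. closed_irreducible N K D \<Longrightarrow> D = C"
    using assms unfolding unique_closed_irreducible_def by blast
  obtain z where z: "z \<in> C" "z \<in> {1..N}" using C unfolding closed_irreducible_def closed_set_def by blast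
  have "(i,z) \<in> (trans_rel N K)\<^sup>*" if i: "i \<in> {1..N}" for i
  proof -
    obtain D where "D \<subseteq> {j. (i, j) \<in> (trans_rel N K)\<^sup>*}" "closed_irreducible N K D"
      using closed_set_contains_irreducible[OF closed_set_reachable[OF i]] by blast
    then show ?thesis using uniq z by blast
  qed
  then show ?thesis using z by blast
qed

text \<open>The lazy kernel \<open>(I + K)/2\<close> replaces \<open>K\<close> because it is aperiodic: some power of it
  charges a common state from every starting point (a Doeblin minorisation), even when \<open>K\<close>
  itself is periodic. The Poisson equation for \<open>K\<close> is recovered from the lazy one.\<close>

definition lazy_kernel :: "(nat \<Rightarrow> nat \<Rightarrow> real) \<Rightarrow> nat \<Rightarrow> nat \<Rightarrow> real" where
  "lazy_kernel K i j = (if i = j then 1/2 else 0) + K i j / 2"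

definition lazy_op :: "nat \<Rightarrow> (nat \<Rightarrow> nat \<Rightarrow> real) \<Rightarrow> (nat \<Rightarrow> real) \<Rightarrow> nat \<Rightarrow> real" where
  "lazy_op N K g i = (\<Sum>j\<in>{1..N}. lazy_kernel K i j * g j)"

definition lazy_power :: "nat \<Rightarrow> (nat \<Rightarrow> nat \<Rightarrow> real) \<Rightarrow> nat \<Rightarrow> nat \<Rightarrow> nat \<Rightarrow> real" where
  "lazy_power N K n i j = (lazy_op N K ^^ n) (\<lambda>k. if k = j then 1 else 0) i"

lemma lazy_power_Suc: "lazy_power N K (Suc n) i j = (\<Sum>k\<in>{1..N}. lazy_kernel K i k * lazy_power N K n k j)"
  unfolding lazy_power_def by (simp add: lazy_op_def)

lemma lazy_power_0: "lazy_power N K 0 i j = (if i = j then 1 else 0)"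
  unfolding lazy_power_def by simp

lemma lazy_op_iterate: "i \<in> {1..N} \<Longrightarrow> (lazy_op N K ^^ n) g i = (\<Sum>j\<in>{1..N}. lazy_power N K n i j * g j)"
proof (induction n arbitrary: i)
  case 0
  have eq: "\<And>j. (if i = j then 1 else 0) * g j = (if i = j then g j else 0)" by simp
  show ?case using 0 unfolding lazy_power_0 eq by (simp add: sum.delta)
next
  case (Suc n)
  have "(lazy_op N K ^^ Suc n) g i = (\<Sum>k\<in>{1..N}. lazy_kernel K i k * (lazy_op N K ^^ n) g k)"
    by (simp add: lazy_op_def)
  also have "\<dots> = (\<Sum>k\<in>{1..N}. lazy_kernel K i k * (\<Sum>j\<in>{1..N}. lazy_power N K n k j * g j))"
    using Suc.IH by (auto intro!: sum.cong)
  also have "\<dots> = (\<Sum>k\<in>{1..N}. \<Sum>j\<in>{1..N}. lazy_kernel K i k * lazy_power N K n k j * g j)"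
    by (simp add: sum_distrib_left mult.assoc)
  also have "\<dots> = (\<Sum>j\<in>{1..N}. \<Sum>k\<in>{1..N}. lazy_kernel K i k * lazy_power N K n k j * g j)"
    by (rule sum.swap)
  also have "\<dots> = (\<Sum>j\<in>{1..N}. (\<Sum>k\<in>{1..N}. lazy_kernel K i k * lazy_power N K n k j) * g j)"
    by (simp add: sum_distrib_right)
  also have "\<dots> = (\<Sum>j\<in>{1..N}. lazy_power N K (Suc n) i j * g j)"
    by (simp add: lazy_power_Suc)
  finally show ?case .
qed

lemma lazy_kernel_nonneg: "stochastic_matrix N K \<Longrightarrow> i \<in> {1..N} \<Longrightarrow> j \<in> {1..N} \<Longrightarrow> lazy_kernel K i j \<ge> 0"
  unfolding lazy_kernel_def stochastic_matrix_def by auto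

lemma sum_lazy_kernel: "stochastic_matrix N K \<Longrightarrow> i \<in> {1..N} \<Longrightarrow> (\<Sum>j\<in>{1..N}. lazy_kernel K i j) = 1"
  unfolding lazy_kernel_def stochastic_matrix_def by (simp add: sum.distrib sum_divide_distrib[symmetric])

lemma lazy_power_nonneg:
  assumes "stochastic_matrix N K"
  shows "i \<in> {1..N} \<Longrightarrow> lazy_power N K n i j \<ge> 0"
proof (induction n arbitrary: i)
  case 0 then show ?case by (simp add: lazy_power_0)
next
  case (Suc n)
  then show ?case unfolding lazy_power_Suc
    by (intro sum_nonneg mult_nonneg_nonneg lazy_kernel_nonneg[OF assms]) auto
qed

lemma lazy_op_iterate_one:
  assumes "stochastic_matrix N K"
  shows "i \<in> {1..N} \<Longrightarrow> (lazy_op N K ^^ n) (\<lambda>_. 1) i = 1"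
proof (induction n arbitrary: i)
  case 0 then show ?case by simp
next
  case (Suc n)
  have "(lazy_op N K ^^ Suc n) (\<lambda>_. 1) i = (\<Sum>k\<in>{1..N}. lazy_kernel K i k * (lazy_op N K ^^ n) (\<lambda>_. 1) k)"
    by (simp add: lazy_op_def)
  also have "\<dots> = (\<Sum>k\<in>{1..N}. lazy_kernel K i k)" using Suc.IH by (auto intro!: sum.cong)
  finally show ?case using sum_lazy_kernel[OF assms Suc.prems] by simp
qed

lemma sum_lazy_power:
  assumes "stochastic_matrix N K" "i \<in> {1..N}"
  shows "(\<Sum>j\<in>{1..N}. lazy_power N K n i j) = 1"
  using lazy_op_iterate[OF assms(2), where K=K and n=n and g="\<lambda>_. 1"] lazy_op_iterate_one[OF assms] by simp

lemma lazy_power_Suc_ge: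
  assumes "stochastic_matrix N K" "i \<in> {1..N}"
  shows "lazy_power N K (Suc n) i j \<ge> lazy_power N K n i j / 2"
proof -
  have "lazy_kernel K i i * lazy_power N K n i j \<le> (\<Sum>k\<in>{1..N}. lazy_kernel K i k * lazy_power N K n k j)"
    by (rule member_le_sum[where f="\<lambda>k. lazy_kernel K i k * lazy_power N K n k j"])
       (use assms lazy_kernel_nonneg lazy_power_nonneg in auto)
  moreover have "lazy_kernel K i i \<ge> 1/2" using assms unfolding lazy_kernel_def stochastic_matrix_def by auto
  moreover have "lazy_power N K n i j \<ge> 0" using lazy_power_nonneg assms by blast
  ultimately show ?thesis unfolding lazy_power_Suc
    using mult_right_mono[of "1/2" "lazy_kernel K i i" "lazy_power N K n i j"] by linarith
qed

lemma lazy_power_pos_mono: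
  assumes "stochastic_matrix N K" "i \<in> {1..N}" "lazy_power N K n i j > 0"
  shows "n \<le> n' \<Longrightarrow> lazy_power N K n' i j > 0"
proof (induction n' rule: dec_induct)
  case base then show ?case using assms by simp
next
  case (step n')
  then show ?case using lazy_power_Suc_ge[OF assms(1,2), of n' j] by simp
qed

lemma lazy_power_pos_if_reachable:
  assumes "stochastic_matrix N K"
    and "(i, z) \<in> (trans_rel N K)\<^sup>*"
  shows "\<exists>n. lazy_power N K n i z > 0"
  using assms(2)
proof (induction rule: converse_rtrancl_induct)
  case base
  then show ?case by (rule exI[of _ 0]) (simp add: lazy_power_0)
next
  case (step y k)
  then obtain n where n: "lazy_power N K n k z > 0" by blast
  have yk: "y \<in> {1..N}" "k \<in> {1..N}" "0 < K y k" using step(1) unfolding trans_rel_def by auto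
  have "lazy_kernel K y k * lazy_power N K n k z \<le> (\<Sum>k'\<in>{1..N}. lazy_kernel K y k' * lazy_power N K n k' z)"
    by (rule member_le_sum[where f="\<lambda>k'. lazy_kernel K y k' * lazy_power N K n k' z"])
       (use assms yk lazy_kernel_nonneg lazy_power_nonneg in auto)
  moreover have "lazy_kernel K y k > 0" using yk assms unfolding lazy_kernel_def stochastic_matrix_def by auto
  ultimately have "lazy_power N K (Suc n) y z > 0" unfolding lazy_power_Suc using n
    by (smt (verit) mult_pos_pos)
  then show ?case by blast
qed

lemma ex_argmin:
  fixes g :: "'a \<Rightarrow> 'b::linorder"
  assumes "finite I" "I \<noteq> {}"
  shows "\<exists>i0\<in>I. \<forall>i\<in>I. g i0 \<le> g i"
proof -
  have "Min (g ` I) \<in> g ` I" using assms by simp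
  then obtain i0 where "i0 \<in> I" "g i0 = Min (g ` I)" by auto
  then show ?thesis using assms by (metis Min_le finite_imageI imageI)
qed

lemma ex_argmax:
  fixes g :: "'a \<Rightarrow> 'b::linorder"
  assumes "finite I" "I \<noteq> {}"
  shows "\<exists>i0\<in>I. \<forall>i\<in>I. g i \<le> g i0"
proof -
  have "Max (g ` I) \<in> g ` I" using assms by simp
  then obtain i0 where "i0 \<in> I" "g i0 = Max (g ` I)" by auto
  then show ?thesis using assms by (metis Max_ge finite_imageI imageI)
qed

text \<open>Both weights put mass at least \<open>\<delta>\<close> on \<open>z\<close>; this common part cancels, and the
  remaining mass \<open>1 - \<delta>\<close> of each is compared with the minimum of \<open>g\<close>.\<close>

lemma doeblin_contraction:
  fixes g w1 w2 :: "'a \<Rightarrow> real"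
  assumes I: "finite I" "z \<in> I"
    and w1: "\<forall>j\<in>I. w1 j \<ge> 0" "(\<Sum>j\<in>I. w1 j) = 1" "w1 z \<ge> \<delta>"
    and w2: "\<forall>j\<in>I. w2 j \<ge> 0" "(\<Sum>j\<in>I. w2 j) = 1" "w2 z \<ge> \<delta>"
    and d: "\<delta> \<ge> 0"
    and D: "\<forall>i\<in>I. \<forall>j\<in>I. g i - g j \<le> D"
  shows "(\<Sum>j\<in>I. w1 j * g j) - (\<Sum>j\<in>I. w2 j * g j) \<le> (1 - \<delta>) * D"
proof -
  obtain i0 where i0: "i0 \<in> I" "\<forall>i\<in>I. g i0 \<le> g i" using ex_argmin[OF I(1), of g] I by blast
  define c where "c j = (if j = z then \<delta> else 0)" for j
  have csum: "(\<Sum>j\<in>I. c j * x j) = \<delta> * x z" for x :: "'a \<Rightarrow> real"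
  proof -
    have "\<And>j. c j * x j = (if j = z then \<delta> * x j else 0)" unfolding c_def by simp
    then show ?thesis using I by (simp add: sum.delta)
  qed
  have dec: "(\<Sum>j\<in>I. w j * g j) = (\<Sum>j\<in>I. (w j - c j) * (g j - g i0)) + \<delta> * (g z - g i0) + g i0"
    if "(\<Sum>j\<in>I. w j) = 1" for w
  proof -
    have "(\<Sum>j\<in>I. w j * g j) = (\<Sum>j\<in>I. w j * (g j - g i0)) + g i0 * (\<Sum>j\<in>I. w j)"
      by (simp add: algebra_simps sum.distrib sum_subtractf sum_distrib_left)
    also have "(\<Sum>j\<in>I. w j * (g j - g i0)) = (\<Sum>j\<in>I. (w j - c j) * (g j - g i0)) + (\<Sum>j\<in>I. c j * (g j - g i0))"
      by (simp add: algebra_simps sum.distrib[symmetric])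
    finally show ?thesis using that csum[of "\<lambda>j. g j - g i0"] by simp
  qed
  have wc: "\<forall>j\<in>I. w j - c j \<ge> 0" if "\<forall>j\<in>I. w j \<ge> 0" "w z \<ge> \<delta>" for w
    using that unfolding c_def by auto
  have sc: "(\<Sum>j\<in>I. w j - c j) = 1 - \<delta>" if "(\<Sum>j\<in>I. w j) = 1" for w
    using that csum[of "\<lambda>_. 1"] by (simp add: sum_subtractf)
  have up: "(\<Sum>j\<in>I. (w1 j - c j) * (g j - g i0)) \<le> (\<Sum>j\<in>I. (w1 j - c j) * D)"
    by (rule sum_mono, rule mult_left_mono) (use wc[OF w1(1,3)] D i0 in auto)
  have lo: "(\<Sum>j\<in>I. (w2 j - c j) * (g j - g i0)) \<ge> 0"
    by (rule sum_nonneg, rule mult_nonneg_nonneg) (use wc[OF w2(1,3)] i0 in auto)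
  have "(\<Sum>j\<in>I. (w1 j - c j) * D) = (1 - \<delta>) * D"
    using sc[OF w1(2)] by (simp add: sum_distrib_right[symmetric])
  then show ?thesis using dec[OF w1(2)] dec[OF w2(2)] up lo by linarith
qed

definition osc_le :: "nat \<Rightarrow> (nat \<Rightarrow> real) \<Rightarrow> real \<Rightarrow> bool" where
  "osc_le N g D \<longleftrightarrow> (\<forall>i\<in>{1..N}. \<forall>j\<in>{1..N}. g i - g j \<le> D)"

lemma lazy_op_osc_le:
  assumes K: "stochastic_matrix N K" and g: "osc_le N g D"
  shows "osc_le N (lazy_op N K g) D"
  unfolding osc_le_def
proof (intro ballI)
  fix i j assume i: "i \<in> {1..N}" and j: "j \<in> {1..N}"
  have "lazy_op N K g i - lazy_op N K g j \<le> (1 - 0) * D" unfolding lazy_op_def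
    by (rule doeblin_contraction[where z=i]) (use i j K lazy_kernel_nonneg sum_lazy_kernel g in \<open>auto simp: osc_le_def\<close>)
  then show "lazy_op N K g i - lazy_op N K g j \<le> D" by simp
qed

lemma lazy_op_power_osc_contract:
  assumes K: "stochastic_matrix N K" and z: "z \<in> {1..N}" and d: "\<delta> \<ge> 0"
    and P: "\<forall>i\<in>{1..N}. lazy_power N K L i z \<ge> \<delta>" and g: "osc_le N g D"
  shows "osc_le N ((lazy_op N K ^^ L) g) ((1 - \<delta>) * D)"
  unfolding osc_le_def
proof (intro ballI)
  fix i j assume i: "i \<in> {1..N}" and j: "j \<in> {1..N}"
  show "(lazy_op N K ^^ L) g i - (lazy_op N K ^^ L) g j \<le> (1 - \<delta>) * D"
    unfolding lazy_op_iterate[OF i] lazy_op_iterate[OF j]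
    by (rule doeblin_contraction[where z=z]) (use i j z d P K lazy_power_nonneg sum_lazy_power g in \<open>auto simp: osc_le_def\<close>)
qed

lemma lazy_op_iterate_osc_le:
  assumes K: "stochastic_matrix N K" and g: "osc_le N g D"
  shows "osc_le N ((lazy_op N K ^^ k) g) D"
  by (induction k) (use g lazy_op_osc_le[OF K] in auto)

lemma lazy_op_iterate_osc_decay:
  assumes K: "stochastic_matrix N K" and z: "z \<in> {1..N}" and d: "\<delta> \<ge> 0" and L: "L > 0"
    and P: "\<forall>i\<in>{1..N}. lazy_power N K L i z \<ge> \<delta>" and f: "osc_le N f D0"
  shows "osc_le N ((lazy_op N K ^^ k) f) ((1 - \<delta>)^(k div L) * D0)"
proof (induction k rule: less_induct)
  case (less k)
  show ?case
  proof (cases "k < L")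
    case True
    then show ?thesis using lazy_op_iterate_osc_le[OF K f] by simp
  next
    case False
    have e: "(lazy_op N K ^^ k) f = (lazy_op N K ^^ L) ((lazy_op N K ^^ (k - L)) f)"
      using False by (metis funpow_add le_add_diff_inverse not_less o_apply)
    have IH: "osc_le N ((lazy_op N K ^^ (k - L)) f) ((1 - \<delta>)^((k - L) div L) * D0)"
      using less.IH[of "k - L"] False L by simp
    have kd: "k div L = Suc ((k - L) div L)" using False L by (simp add: le_div_geq)
    show ?thesis unfolding e kd using lazy_op_power_osc_contract[OF K z d P IH] by (simp add: mult.assoc)
  qed
qed

lemma stationary_lazy_op:
  assumes K: "stochastic_matrix N K" and mu: "stationary N K \<mu>"
  shows "(\<Sum>i\<in>{1..N}. \<mu> i * lazy_op N K g i) = (\<Sum>i\<in>{1..N}. \<mu> i * g i)"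
proof -
  have col: "(\<Sum>i\<in>{1..N}. \<mu> i * lazy_kernel K i j) = \<mu> j" if j: "j \<in> {1..N}" for j
  proof -
    have "(\<Sum>i\<in>{1..N}. \<mu> i * lazy_kernel K i j) = (\<Sum>i\<in>{1..N}. (if i = j then \<mu> i / 2 else 0)) + (\<Sum>i\<in>{1..N}. \<mu> i * K i j) / 2"
    proof -
      have "\<And>i. \<mu> i * lazy_kernel K i j = (if i = j then \<mu> i / 2 else 0) + \<mu> i * K i j / 2"
        by (simp add: lazy_kernel_def algebra_simps)
      then show ?thesis by (simp add: sum.distrib sum_divide_distrib)
    qed
    also have "\<dots> = \<mu> j / 2 + \<mu> j / 2" using j mu unfolding stationary_def by (simp add: sum.delta')
    finally show ?thesis by simp
  qed
  have "(\<Sum>i\<in>{1..N}. \<mu> i * lazy_op N K g i) = (\<Sum>i\<in>{1..N}. \<Sum>j\<in>{1..N}. \<mu> i * lazy_kernel K i j * g j)"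
    unfolding lazy_op_def by (simp add: sum_distrib_left mult.assoc)
  also have "\<dots> = (\<Sum>j\<in>{1..N}. \<Sum>i\<in>{1..N}. \<mu> i * lazy_kernel K i j * g j)" by (rule sum.swap)
  also have "\<dots> = (\<Sum>j\<in>{1..N}. (\<Sum>i\<in>{1..N}. \<mu> i * lazy_kernel K i j) * g j)" by (simp add: sum_distrib_right)
  also have "\<dots> = (\<Sum>j\<in>{1..N}. \<mu> j * g j)" using col by simp
  finally show ?thesis .
qed

lemma abs_le_osc_if_centered:
  assumes mu: "prob_vector N \<mu>" and c: "(\<Sum>i\<in>{1..N}. \<mu> i * g i) = 0" and g: "osc_le N g D"
    and i: "i \<in> {1..N}"
  shows "\<bar>g i\<bar> \<le> D"
proof -
  have ne: "{1..N} \<noteq> {}" using i by auto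
  obtain i0 where i0: "i0 \<in> {1..N}" "\<forall>i\<in>{1..N}. g i0 \<le> g i" using ex_argmin[of "{1..N}" g] ne by auto
  obtain i1 where i1: "i1 \<in> {1..N}" "\<forall>i\<in>{1..N}. g i \<le> g i1" using ex_argmax[of "{1..N}" g] ne by auto
  have "(\<Sum>i\<in>{1..N}. \<mu> i * g i0) \<le> (\<Sum>i\<in>{1..N}. \<mu> i * g i)"
    by (rule sum_mono, rule mult_left_mono) (use mu i0 in \<open>auto simp: prob_vector_def\<close>)
  then have a: "g i0 \<le> 0" using mu c by (simp add: prob_vector_def sum_distrib_right[symmetric])
  have "(\<Sum>i\<in>{1..N}. \<mu> i * g i) \<le> (\<Sum>i\<in>{1..N}. \<mu> i * g i1)"
    by (rule sum_mono, rule mult_left_mono) (use mu i1 in \<open>auto simp: prob_vector_def\<close>)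
  then have b: "g i1 \<ge> 0" using mu c by (simp add: prob_vector_def sum_distrib_right[symmetric])
  have "g i - g i0 \<le> D" "g i1 - g i \<le> D" using g i i0 i1 unfolding osc_le_def by auto
  then show ?thesis using a b by linarith
qed

lemma sum_power_div_blocks:
  fixes \<rho> :: real
  assumes "L > 0"
  shows "(\<Sum>k<q * L. \<rho>^(k div L)) = L * (\<Sum>i<q. \<rho>^i)"
proof (induction q)
  case 0 then show ?case by simp
next
  case (Suc q)
  have "(\<Sum>k<Suc q * L. \<rho>^(k div L)) = (\<Sum>k<q * L. \<rho>^(k div L)) + (\<Sum>k\<in>{q*L..<q*L+L}. \<rho>^(k div L))"
    by (simp add: lessThan_atLeast0 sum.atLeastLessThan_concat add.commute)
  also have "(\<Sum>k\<in>{q*L..<q*L+L}. \<rho>^(k div L)) = (\<Sum>k\<in>{q*L..<q*L+L}. \<rho>^q)"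
  proof (rule sum.cong)
    fix k assume "k \<in> {q*L..<q*L+L}"
    then have "k div L = q" by (intro div_nat_eqI) (auto simp: mult.commute)
    then show "\<rho>^(k div L) = \<rho>^q" by simp
  qed simp
  finally show ?case using Suc by (simp add: algebra_simps)
qed

lemma lazy_op_geometric_contraction:
  assumes K: "stochastic_matrix N K" and U: "unique_closed_irreducible N K"
  obtains L :: nat and \<rho> :: real where "L > 0" "0 \<le> \<rho>" "\<rho> < 1"
    "\<And>f D k. osc_le N f D \<Longrightarrow> osc_le N ((lazy_op N K ^^ k) f) (\<rho>^(k div L) * D)"
proof -
  obtain z where z: "z \<in> {1..N}" and zr: "\<forall>i\<in>{1..N}. (i,z) \<in> (trans_rel N K)\<^sup>*"
    using common_target_reachable[OF U] by blast
  have "\<forall>i\<in>{1..N}. \<exists>n. lazy_power N K n i z > 0" using lazy_power_pos_if_reachable[OF K] zr by blast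
  then obtain nn where nn: "\<forall>i\<in>{1..N}. lazy_power N K (nn i) i z > 0" by metis
  define L where "L = Suc (Max (nn ` {1..N}))"
  have PL: "\<forall>i\<in>{1..N}. lazy_power N K L i z > 0"
  proof
    fix i assume i: "i \<in> {1..N}"
    have "nn i \<le> L" unfolding L_def using i by (simp add: le_SucI)
    then show "lazy_power N K L i z > 0" using lazy_power_pos_mono[OF K i] nn i by blast
  qed
  define \<delta> where "\<delta> = Min ((\<lambda>i. lazy_power N K L i z) ` {1..N})"
  have d0: "\<delta> > 0" unfolding \<delta>_def using PL z by (subst Min_gr_iff) auto
  have dP: "\<forall>i\<in>{1..N}. lazy_power N K L i z \<ge> \<delta>" unfolding \<delta>_def by simp
  have d1: "\<delta> \<le> 1"
  proof -
    have "lazy_power N K L z z \<le> (\<Sum>j\<in>{1..N}. lazy_power N K L z j)"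
      by (rule member_le_sum) (use z lazy_power_nonneg[OF K] in auto)
    then show ?thesis using dP z sum_lazy_power[OF K z] by force
  qed
  show ?thesis
  proof
    show "0 < L" unfolding L_def by simp
    show "0 \<le> 1 - \<delta>" "1 - \<delta> < 1" using d0 d1 by auto
    show "osc_le N ((lazy_op N K ^^ k) f) ((1 - \<delta>)^(k div L) * D)" if "osc_le N f D" for f D k
      by (rule lazy_op_iterate_osc_decay[OF K z _ _ dP that]) (use d0 in \<open>auto simp: L_def\<close>)
  qed
qed

lemma lazy_op_partial_sum_poisson:
  fixes K :: "nat \<Rightarrow> nat \<Rightarrow> real" and f :: "nat \<Rightarrow> real" and n :: nat
  assumes i: "i \<in> {1..N}"
  defines "h \<equiv> \<lambda>i. (\<Sum>k<n. (lazy_op N K ^^ k) f i) / 2"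
  shows "h i - (\<Sum>j\<in>{1..N}. K i j * h j) = f i - (lazy_op N K ^^ n) f i"
proof -
  define u where "u k = (lazy_op N K ^^ k) f" for k
  have lazy_op_split: "lazy_op N K g i = g i / 2 + (\<Sum>j\<in>{1..N}. K i j * g j) / 2" for g
  proof -
    have "\<And>j. lazy_kernel K i j * g j = (if i = j then g j / 2 else 0) + K i j * g j / 2"
      by (simp add: lazy_kernel_def algebra_simps)
    then show ?thesis using i unfolding lazy_op_def by (simp add: sum.distrib sum_divide_distrib)
  qed
  have lazy_op_sum: "lazy_op N K (\<lambda>i. \<Sum>k<n. u k i) i = (\<Sum>k<n. u (Suc k) i)"
  proof -
    have "lazy_op N K (\<lambda>i. \<Sum>k<n. u k i) i = (\<Sum>j\<in>{1..N}. \<Sum>k<n. lazy_kernel K i j * u k j)"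
      unfolding lazy_op_def by (simp add: sum_distrib_left)
    also have "\<dots> = (\<Sum>k<n. \<Sum>j\<in>{1..N}. lazy_kernel K i j * u k j)" by (rule sum.swap)
    also have "\<dots> = (\<Sum>k<n. u (Suc k) i)" unfolding u_def by (simp add: lazy_op_def)
    finally show ?thesis .
  qed
  have "(\<Sum>j\<in>{1..N}. K i j * h j) = (\<Sum>j\<in>{1..N}. K i j * (\<Sum>k<n. u k j)) / 2"
    unfolding h_def u_def by (simp add: sum_divide_distrib[symmetric])
  also have "(\<Sum>j\<in>{1..N}. K i j * (\<Sum>k<n. u k j)) = 2 * lazy_op N K (\<lambda>i. \<Sum>k<n. u k i) i - (\<Sum>k<n. u k i)"
    using lazy_op_split[of "\<lambda>i. \<Sum>k<n. u k i"] by simp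
  finally have "h i - (\<Sum>j\<in>{1..N}. K i j * h j) = (\<Sum>k<n. u k i) - (\<Sum>k<n. u (Suc k) i)"
    unfolding h_def u_def lazy_op_sum[unfolded u_def] by simp
  also have "\<dots> = u 0 i - u n i"
    using sum_lessThan_telescope'[of "\<lambda>k. u k i" n] by (simp add: sum_subtractf)
  finally show ?thesis by (simp add: u_def)
qed

text \<open>The exact solution \<open>\<Sum>k. T\<^sup>k f / 2\<close> of the Poisson equation for the lazy operator
  \<open>T = (I + K)/2\<close> is approximated by truncating the series; geometric contraction of
  oscillations bounds the truncation uniformly in the truncation point.\<close>

lemma approx_poisson_solution:
  fixes f :: "nat \<Rightarrow> real"
  assumes K: "stochastic_matrix N K" and U: "unique_closed_irreducible N K"
    and mu: "stationary N K \<mu>" and fc: "(\<Sum>i\<in>{1..N}. \<mu> i * f i) = 0"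
    and fb: "\<forall>i\<in>{1..N}. \<bar>f i\<bar> \<le> 1"
  shows "\<exists>H>0. \<forall>\<epsilon>>0. \<exists>h. (\<forall>i\<in>{1..N}. \<bar>h i\<bar> \<le> H) \<and>
           (\<forall>i\<in>{1..N}. \<bar>h i - (\<Sum>j\<in>{1..N}. K i j * h j) - f i\<bar> \<le> \<epsilon>)"
proof -
  obtain L \<rho> where L: "L > 0" and r0: "0 \<le> \<rho>" "\<rho> < 1"
    and contr: "\<And>f D k. osc_le N f D \<Longrightarrow> osc_le N ((lazy_op N K ^^ k) f) (\<rho>^(k div L) * D)"
    using lazy_op_geometric_contraction[OF K U] by blast
  define u where "u k = (lazy_op N K ^^ k) f" for k
  have uc: "(\<Sum>i\<in>{1..N}. \<mu> i * u k i) = 0" for k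
    unfolding u_def by (induction k) (use fc stationary_lazy_op[OF K mu] in auto)
  have "osc_le N f 2" unfolding osc_le_def using fb by (smt (verit))
  then have "osc_le N (u k) (\<rho>^(k div L) * 2)" for k
    unfolding u_def by (rule contr)
  then have ub: "\<bar>u k i\<bar> \<le> \<rho>^(k div L) * 2" if "i \<in> {1..N}" for k i
    using abs_le_osc_if_centered[OF _ uc _ that] mu unfolding stationary_def by blast
  define H where "H = real L / (1 - \<rho>)"
  have "\<exists>h. (\<forall>i\<in>{1..N}. \<bar>h i\<bar> \<le> H) \<and> (\<forall>i\<in>{1..N}. \<bar>h i - (\<Sum>j\<in>{1..N}. K i j * h j) - f i\<bar> \<le> \<epsilon>)"
    if e: "\<epsilon> > 0" for \<epsilon>
  proof -
    obtain q where q: "\<rho>^q < \<epsilon> / 2" using real_arch_pow_inv[of "\<epsilon>/2" \<rho>] e r0 by auto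
    define n where "n = q * L"
    define h where "h i = (\<Sum>k<n. u k i) / 2" for i
    have "\<bar>h i\<bar> \<le> H" if i: "i \<in> {1..N}" for i
    proof -
      have "\<bar>\<Sum>k<n. u k i\<bar> \<le> (\<Sum>k<n. \<rho>^(k div L) * 2)"
        using ub[OF i] by (intro order_trans[OF sum_abs] sum_mono) auto
      also have "\<dots> = 2 * (\<Sum>k<q * L. \<rho>^(k div L))"
        unfolding n_def by (simp add: sum_distrib_left mult.commute)
      also have "\<dots> = 2 * (L * (\<Sum>j<q. \<rho>^j))"
        by (simp add: sum_power_div_blocks[OF L])
      also have "(\<Sum>j<q. \<rho>^j) \<le> 1 / (1 - \<rho>)"
        using r0 by (simp add: sum_gp_strict divide_right_mono)
      then have "2 * (L * (\<Sum>j<q. \<rho>^j)) \<le> 2 * (L * (1 / (1 - \<rho>)))"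
        by (intro mult_left_mono) auto
      finally show ?thesis unfolding h_def H_def by (simp add: mult.commute)
    qed
    moreover have "\<bar>h i - (\<Sum>j\<in>{1..N}. K i j * h j) - f i\<bar> \<le> \<epsilon>" if i: "i \<in> {1..N}" for i
    proof -
      have "h i - (\<Sum>j\<in>{1..N}. K i j * h j) - f i = - u n i"
        using lazy_op_partial_sum_poisson[OF i, where n=n and K=K and f=f] unfolding h_def u_def by simp
      moreover have "\<bar>u n i\<bar> \<le> \<rho>^q * 2" using ub[OF i, of n] L unfolding n_def by simp
      ultimately show ?thesis using q by simp
    qed
    ultimately show ?thesis by blast
  qed
  moreover have "H > 0" unfolding H_def using L r0 by simp
  ultimately show ?thesis by blast
qed

lemma exp_le_quadratic:
  fixes x :: real
  assumes "\<bar>x\<bar> \<le> 1"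
  shows "exp x \<le> 1 + x + x\<^sup>2"
proof (cases "x \<ge> 0")
  case True then show ?thesis using exp_bound assms by auto
next
  case False
  have "1 - x \<le> exp (- x)" using exp_ge_add_one_self[of "-x"] by simp
  have "x\<^sup>2 > 0" using False by simp
  moreover have "1 + x \<ge> 0" using assms by simp
  ultimately have pos: "1 + x + x\<^sup>2 > 0" by linarith
  have "x * (x * x) \<le> 0" using mult_nonpos_nonneg[of x "x*x"] False by simp
  then have "1 \<le> (1 + x + x\<^sup>2) * (1 - x)" by (simp add: algebra_simps power2_eq_square power3_eq_cube)
  also have "\<dots> \<le> (1 + x + x\<^sup>2) * exp (-x)"
    using \<open>1 - x \<le> exp (- x)\<close> pos by (intro mult_left_mono) auto
  finally have "exp x * 1 \<le> exp x * ((1 + x + x\<^sup>2) * exp (-x))" by (intro mult_left_mono) auto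
  also have "\<dots> = 1 + x + x\<^sup>2" by (simp add: exp_minus field_simps)
  finally show ?thesis by simp
qed

lemma bernoulli_mgf_le:
  fixes p l :: real
  assumes p: "0 \<le> p" "p \<le> 1" and l: "\<bar>l\<bar> \<le> 1"
  shows "p * exp (l/2) + (1 - p) * exp (-l/2) \<le> exp (l * (p - 1/2) + l\<^sup>2)"
proof -
  have e1: "exp (l/2) = exp (l * (p - 1/2)) * exp (l * (1 - p))" by (simp add: exp_add[symmetric] algebra_simps)
  have e2: "exp (-l/2) = exp (l * (p - 1/2)) * exp (- (l * p))" by (simp add: exp_add[symmetric] algebra_simps)
  have "\<bar>l * (1 - p)\<bar> \<le> 1" unfolding abs_mult using p l by (intro mult_le_one) auto
  then have b1: "exp (l * (1 - p)) \<le> 1 + l * (1 - p) + (l * (1 - p))\<^sup>2"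
    by (rule exp_le_quadratic)
  have "\<bar>- (l * p)\<bar> \<le> 1" unfolding abs_minus_cancel abs_mult using p l by (intro mult_le_one) auto
  then have b2: "exp (- (l * p)) \<le> 1 + - (l * p) + (- (l * p))\<^sup>2"
    by (rule exp_le_quadratic)
  have "p * exp (l * (1 - p)) + (1 - p) * exp (- (l * p))
      \<le> p * (1 + l * (1 - p) + (l * (1 - p))\<^sup>2) + (1 - p) * (1 + - (l * p) + (- (l * p))\<^sup>2)"
    using b1 b2 p by (intro add_mono mult_left_mono) auto
  also have "\<dots> = 1 + l\<^sup>2 * (p * (1 - p))" by (simp add: algebra_simps power2_eq_square)
  also have "\<dots> \<le> 1 + l\<^sup>2" using p by (intro add_left_mono mult_left_le) (auto simp: mult_le_one)
  also have "\<dots> \<le> exp (l\<^sup>2)" by (rule exp_ge_add_one_self)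
  finally have "p * exp (l * (1 - p)) + (1 - p) * exp (- (l * p)) \<le> exp (l\<^sup>2)" .
  then have "exp (l * (p - 1/2)) * (p * exp (l * (1 - p)) + (1 - p) * exp (- (l * p))) \<le> exp (l * (p - 1/2)) * exp (l\<^sup>2)"
    by (intro mult_left_mono) auto
  moreover have "p * exp (l/2) + (1 - p) * exp (-l/2) = exp (l * (p - 1/2)) * (p * exp (l * (1 - p)) + (1 - p) * exp (- (l * p)))"
    unfolding e1 e2 by (simp add: algebra_simps)
  moreover have "exp (l * (p - 1/2) + l\<^sup>2) = exp (l * (p - 1/2)) * exp (l\<^sup>2)" by (simp add: exp_add)
  ultimately show ?thesis by simp
qed

lemma weighted_exp_le:
  fixes w x :: "'a \<Rightarrow> real"
  assumes I: "finite I" and w: "\<forall>j\<in>I. w j \<ge> 0" "(\<Sum>j\<in>I. w j) = 1" and c: "(\<Sum>j\<in>I. w j * x j) = 0"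
    and x: "\<forall>j\<in>I. \<bar>x j\<bar> \<le> 1" "\<forall>j\<in>I. (x j)\<^sup>2 \<le> B"
  shows "(\<Sum>j\<in>I. w j * exp (x j)) \<le> exp B"
proof -
  have "(\<Sum>j\<in>I. w j * exp (x j)) \<le> (\<Sum>j\<in>I. w j * (1 + x j + (x j)\<^sup>2))"
    by (rule sum_mono, rule mult_left_mono) (use w x exp_le_quadratic in auto)
  also have "\<dots> = (\<Sum>j\<in>I. w j) + (\<Sum>j\<in>I. w j * x j) + (\<Sum>j\<in>I. w j * (x j)\<^sup>2)"
    by (simp add: algebra_simps sum.distrib)
  also have "(\<Sum>j\<in>I. w j * (x j)\<^sup>2) \<le> (\<Sum>j\<in>I. w j * B)"
    by (rule sum_mono, rule mult_left_mono) (use w x in auto)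
  also have "(\<Sum>j\<in>I. w j * B) = B" using w by (simp add: sum_distrib_right[symmetric])
  finally have "(\<Sum>j\<in>I. w j * exp (x j)) \<le> 1 + B" using w c by simp
  also have "\<dots> \<le> exp B" using exp_ge_add_one_self[of B] by simp
  finally show ?thesis .
qed

lemma weighted_exp_le_exp_mean:
  fixes w x :: "'a \<Rightarrow> real"
  assumes I: "finite I" and w: "\<forall>j\<in>I. w j \<ge> 0" "(\<Sum>j\<in>I. w j) = 1"
    and x: "\<forall>j\<in>I. \<bar>x j\<bar> \<le> H" and l: "\<bar>l\<bar> * (2 * H) \<le> 1"
  shows "(\<Sum>j\<in>I. w j * exp (l * x j)) \<le> exp (l * (\<Sum>j\<in>I. w j * x j) + 4 * H\<^sup>2 * l\<^sup>2)"
proof -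
  define m where "m = (\<Sum>j\<in>I. w j * x j)"
  have "\<bar>m\<bar> \<le> (\<Sum>j\<in>I. w j * H)"
    unfolding m_def using w x by (intro order_trans[OF sum_abs] sum_mono) (auto simp: abs_mult mult_left_mono)
  then have m: "\<bar>m\<bar> \<le> H" using w by (simp add: sum_distrib_right[symmetric])
  have dev: "\<bar>l * (x j - m)\<bar> \<le> \<bar>l\<bar> * (2 * H)" if "j \<in> I" for j
    using x that m by (auto simp: abs_mult intro!: mult_left_mono)
  have "(\<Sum>j\<in>I. w j * exp (l * (x j - m))) \<le> exp (4 * H\<^sup>2 * l\<^sup>2)"
  proof (rule weighted_exp_le[OF I w])
    have "(\<Sum>j\<in>I. w j * (l * (x j - m))) = l * (\<Sum>j\<in>I. w j * x j) - l * m * (\<Sum>j\<in>I. w j)"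
      by (simp add: algebra_simps sum_subtractf sum_distrib_left sum_distrib_right)
    then show "(\<Sum>j\<in>I. w j * (l * (x j - m))) = 0" using w unfolding m_def by simp
    show "\<forall>j\<in>I. \<bar>l * (x j - m)\<bar> \<le> 1" using dev l by (meson order_trans)
    have "(l * (x j - m))\<^sup>2 \<le> (\<bar>l\<bar> * (2 * H))\<^sup>2" if "j \<in> I" for j
      using dev[OF that] by (metis abs_ge_zero power2_abs power_mono)
    then show "\<forall>j\<in>I. (l * (x j - m))\<^sup>2 \<le> 4 * H\<^sup>2 * l\<^sup>2"
      by (simp add: power_mult_distrib algebra_simps)
  qed
  moreover have "(\<Sum>j\<in>I. w j * exp (l * x j)) = exp (l * m) * (\<Sum>j\<in>I. w j * exp (l * (x j - m)))"
    unfolding sum_distrib_left by (rule sum.cong) (auto simp: exp_add[symmetric] algebra_simps)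
  ultimately show ?thesis unfolding m_def[symmetric] by (simp add: exp_add mult_left_mono)
qed

text \<open>With \<open>f = p - 1/2\<close> and \<open>h\<close> an approximate solution of the Poisson equation
  \<open>h - K h = f\<close>, the function \<open>exp (l (h - f))\<close> grows by at most a factor \<open>exp (O(l\<^sup>2))\<close> per
  step of the tilted chain: the tilt of the coin at state \<open>k\<close> contributes \<open>exp (l f k)\<close> up to
  \<open>O(l\<^sup>2)\<close>, which cancels \<open>- f k\<close>, and what remains is \<open>exp (l (K h) i) \<approx> exp (l (h - f) i)\<close>.\<close>

lemma poisson_exp_drift_le:
  assumes K: "stochastic_matrix N K" and i: "i \<in> {1..N}"
    and p: "\<forall>k\<in>{1..N}. 0 \<le> p k \<and> p k \<le> 1"
    and l: "\<bar>l\<bar> \<le> 1" "\<bar>l\<bar> * (2 * H) \<le> 1"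
    and hb: "\<forall>k\<in>{1..N}. \<bar>h k\<bar> \<le> H"
    and he: "\<bar>h i - (\<Sum>k\<in>{1..N}. K i k * h k) - (p i - 1/2)\<bar> \<le> \<bar>l\<bar>"
  shows "(\<Sum>k\<in>{1..N}. K i k * (p k * exp (l/2) + (1 - p k) * exp (-l/2)) * exp (l * (h k - (p k - 1/2))))
     \<le> exp ((2 + 4 * H\<^sup>2) * l\<^sup>2) * exp (l * (h i - (p i - 1/2)))"
proof -
  have Kn: "\<forall>k\<in>{1..N}. 0 \<le> K i k" and Ks: "(\<Sum>k\<in>{1..N}. K i k) = 1"
    using K i unfolding stochastic_matrix_def by auto
  define Kh where "Kh = (\<Sum>k\<in>{1..N}. K i k * h k)"
  have "(\<Sum>k\<in>{1..N}. K i k * (p k * exp (l/2) + (1 - p k) * exp (-l/2)) * exp (l * (h k - (p k - 1/2))))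
      \<le> (\<Sum>k\<in>{1..N}. K i k * exp (l * (p k - 1/2) + l\<^sup>2) * exp (l * (h k - (p k - 1/2))))"
    by (rule sum_mono, intro mult_right_mono mult_left_mono bernoulli_mgf_le) (use p l Kn in auto)
  also have "\<dots> = exp (l\<^sup>2) * (\<Sum>k\<in>{1..N}. K i k * exp (l * h k))"
    unfolding sum_distrib_left by (rule sum.cong) (auto simp: exp_add[symmetric] algebra_simps)
  also have "(\<Sum>k\<in>{1..N}. K i k * exp (l * h k)) \<le> exp (l * Kh + 4 * H\<^sup>2 * l\<^sup>2)"
    unfolding Kh_def by (rule weighted_exp_le_exp_mean) (use Kn Ks hb l in auto)
  also have "\<dots> \<le> exp (l * (h i - (p i - 1/2)) + l\<^sup>2 + 4 * H\<^sup>2 * l\<^sup>2)"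
  proof -
    have d: "\<bar>Kh - (h i - (p i - 1/2))\<bar> \<le> \<bar>l\<bar>"
      using he unfolding Kh_def by (simp add: abs_minus_commute algebra_simps)
    have "l * (Kh - (h i - (p i - 1/2))) \<le> \<bar>l\<bar> * \<bar>Kh - (h i - (p i - 1/2))\<bar>"
      by (metis abs_ge_self abs_mult)
    also have "\<dots> \<le> \<bar>l\<bar> * \<bar>l\<bar>" using d by (rule mult_left_mono) simp
    finally show ?thesis by (simp add: algebra_simps power2_eq_square)
  qed
  finally show ?thesis by (simp add: exp_add[symmetric] algebra_simps)
qed

lemma sum_times_bool: "(\<Sum>y\<in>A \<times> (UNIV::bool set). Fn y) = (\<Sum>k\<in>A. Fn (k,True) + Fn (k,False))"
proof -
  have "(\<Sum>k\<in>A. \<Sum>d\<in>(UNIV::bool set). Fn (k,d)) = (\<Sum>(k,d)\<in>A \<times> UNIV. Fn (k,d))"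
    by (rule sum.cartesian_product)
  then show ?thesis by (simp add: UNIV_bool add.commute)
qed

text \<open>The pair \<open>(R\<^sub>j, \<xi>(j))\<close> is the state of a Markov chain on \<open>{1..N} \<times> bool\<close>;
  \<open>chain_weight \<eta> K (coin_prob p) m s\<close> is the probability that the first \<open>m\<close> pairs equal
  \<open>s\<close>, and \<open>tilted_coin p l\<close> multiplies it by \<open>exp (l (\<xi>(j) - 1/2))\<close> in each step.\<close>

abbreviation chain_weight :: "(nat \<Rightarrow> real) \<Rightarrow> (nat \<Rightarrow> nat \<Rightarrow> real) \<Rightarrow> (nat \<times> bool \<Rightarrow> real)
    \<Rightarrow> nat \<Rightarrow> (nat \<Rightarrow> nat \<times> bool) \<Rightarrow> real" where
  "chain_weight \<eta> K \<phi> \<equiv> path_weight (\<lambda>x. \<eta> (fst x)) (\<lambda>x y. K (fst x) (fst y)) \<phi>"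

definition coin_prob :: "(nat \<Rightarrow> real) \<Rightarrow> nat \<times> bool \<Rightarrow> real" where
  "coin_prob p x = (if snd x then p (fst x) else 1 - p (fst x))"

definition tilted_coin :: "(nat \<Rightarrow> real) \<Rightarrow> real \<Rightarrow> nat \<times> bool \<Rightarrow> real" where
  "tilted_coin p l x = coin_prob p x * exp (l * ((if snd x then 1 else 0) - 1/2))"

lemma sum_chain_weight_coin_prob:
  assumes K: "stochastic_matrix N K" and eta: "prob_vector N \<eta>"
  shows "(\<Sum>s\<in>paths ({1..N} \<times> UNIV) (Suc m). chain_weight \<eta> K (coin_prob p) (Suc m) s) = 1"
proof -
  have "(\<Sum>s\<in>paths ({1..N} \<times> UNIV) (Suc m). chain_weight \<eta> K (coin_prob p) (Suc m) s)
      = (\<Sum>x\<in>{1..N} \<times> UNIV. \<eta> (fst x) * coin_prob p x)"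
    using K unfolding stochastic_matrix_def
    by (intro sum_path_weight) (auto simp: sum_times_bool coin_prob_def algebra_simps)
  also have "\<dots> = 1" using eta by (simp add: sum_times_bool coin_prob_def algebra_simps prob_vector_def)
  finally show ?thesis .
qed

lemma sum_initial_tilted_le:
  assumes eta: "prob_vector N \<eta>" and p: "\<forall>k\<in>{1..N}. 0 \<le> p k \<and> p k \<le> 1" and l: "\<bar>l\<bar> \<le> 1"
    and g: "\<forall>k\<in>{1..N}. \<bar>l * g k\<bar> \<le> B"
  shows "(\<Sum>x\<in>{1..N} \<times> UNIV. \<eta> (fst x) * tilted_coin p l x * exp (l * g (fst x))) \<le> exp (B + 1)"
proof -
  have "tilted_coin p l x * exp (l * g (fst x)) \<le> coin_prob p x * exp (B + 1)"
    if x: "x \<in> {1..N} \<times> UNIV" for x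
  proof -
    have "l * ((if snd x then 1 else 0) - 1/2) + l * g (fst x) \<le> B + 1"
      using g x l by (auto simp: abs_le_iff)
    moreover have "coin_prob p x \<ge> 0" using p x unfolding coin_prob_def by auto
    ultimately show ?thesis
      unfolding tilted_coin_def by (simp add: mult.assoc mult_left_mono exp_add[symmetric])
  qed
  then have "(\<Sum>x\<in>{1..N} \<times> UNIV. \<eta> (fst x) * tilted_coin p l x * exp (l * g (fst x)))
      \<le> (\<Sum>x\<in>{1..N} \<times> UNIV. \<eta> (fst x) * coin_prob p x * exp (B + 1))"
    using eta unfolding prob_vector_def by (intro sum_mono) (auto simp: mult.assoc mult_left_mono)
  also have "\<dots> = exp (B + 1) * (\<Sum>x\<in>{1..N} \<times> UNIV. \<eta> (fst x) * coin_prob p x)"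
    by (simp add: sum_distrib_left mult_ac)
  also have "(\<Sum>x\<in>{1..N} \<times> UNIV. \<eta> (fst x) * coin_prob p x) = 1"
    using eta by (simp add: sum_times_bool coin_prob_def algebra_simps prob_vector_def)
  finally show ?thesis by simp
qed

lemma tilted_path_sum_le:
  assumes K: "stochastic_matrix N K" and p: "\<forall>i\<in>{1..N}. 0 < p i \<and> p i < 1"
    and eta: "prob_vector N \<eta>" and H0: "H > 0" and l1: "\<bar>l\<bar> \<le> 1" and l2: "\<bar>l\<bar> * (2 * H) \<le> 1"
    and hb: "\<forall>i\<in>{1..N}. \<bar>h i\<bar> \<le> H"
    and he: "\<forall>i\<in>{1..N}. \<bar>h i - (\<Sum>j\<in>{1..N}. K i j * h j) - (p i - 1/2)\<bar> \<le> \<bar>l\<bar>"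
  shows "(\<Sum>s\<in>paths ({1..N} \<times> UNIV) (Suc m). chain_weight \<eta> K (tilted_coin p l) (Suc m) s)
    \<le> exp (2 * H + 3) * exp ((2 + 4 * H\<^sup>2) * l\<^sup>2 * real (Suc m))"
proof -
  define f where "f i = p i - 1/2" for i
  define c where "c = 2 + 4 * H\<^sup>2"
  have fb: "\<forall>i\<in>{1..N}. \<bar>f i\<bar> \<le> 1" using p unfolding f_def by force
  define V where "V x = exp (l * (h (fst x) - f (fst x)))" for x :: "nat \<times> bool"
  define S where "S = {1..N} \<times> (UNIV :: bool set)"
  define \<rho> where "\<rho> = exp (c * l\<^sup>2)"
  have ly: "\<forall>x\<in>S. (\<Sum>y\<in>S. K (fst x) (fst y) * tilted_coin p l y * V y) \<le> \<rho> * V x"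
  proof
    fix x assume x: "x \<in> S"
    then have i: "fst x \<in> {1..N}" unfolding S_def by auto
    have "(\<Sum>y\<in>S. K (fst x) (fst y) * tilted_coin p l y * V y)
        = (\<Sum>k\<in>{1..N}. K (fst x) k * (p k * exp (l/2) + (1 - p k) * exp (-l/2)) * exp (l * (h k - (p k - 1/2))))"
      unfolding S_def sum_times_bool
      by (auto intro!: sum.cong simp: tilted_coin_def coin_prob_def V_def f_def algebra_simps)
    also have "\<dots> \<le> \<rho> * V x"
      using poisson_exp_drift_le[OF K i _ l1 l2 hb] he i p
      unfolding \<rho>_def V_def c_def f_def by (auto simp: less_imp_le)
    finally show "(\<Sum>y\<in>S. K (fst x) (fst y) * tilted_coin p l y * V y) \<le> \<rho> * V x" .
  qed
  have a0: "\<forall>x\<in>S. \<eta> (fst x) \<ge> 0" using eta unfolding S_def prob_vector_def by auto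
  have P0: "\<forall>x\<in>S. \<forall>y\<in>S. K (fst x) (fst y) \<ge> 0" using K unfolding S_def stochastic_matrix_def by auto
  have q0: "\<forall>x\<in>S. coin_prob p x \<ge> 0" using p unfolding S_def coin_prob_def by (auto simp: less_imp_le)
  have ph0: "\<forall>x\<in>S. tilted_coin p l x \<ge> 0" using q0 unfolding tilted_coin_def by auto
  have Vb: "\<forall>k\<in>{1..N}. \<bar>l * (h k - f k)\<bar> \<le> H + 1"
  proof
    fix k assume "k \<in> {1..N}"
    then have "\<bar>h k - f k\<bar> \<le> H + 1"
      using hb fb by (force intro: order_trans[OF abs_triangle_ineq4])
    then have "\<bar>l\<bar> * \<bar>h k - f k\<bar> \<le> 1 * (H + 1)"
      using l1 H0 by (intro mult_mono) auto
    then show "\<bar>l * (h k - f k)\<bar> \<le> H + 1" by (simp add: abs_mult)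
  qed
  have Vlow: "\<forall>x\<in>S. 1 \<le> exp (H + 1) * V x"
  proof
    fix x assume "x \<in> S"
    then have "\<bar>l * (h (fst x) - f (fst x))\<bar> \<le> H + 1" using Vb unfolding S_def by auto
    then have "0 \<le> H + 1 + l * (h (fst x) - f (fst x))" unfolding abs_le_iff by linarith
    then show "1 \<le> exp (H + 1) * V x" unfolding V_def by (simp add: exp_add[symmetric])
  qed
  have "(\<Sum>x\<in>S. \<eta> (fst x) * tilted_coin p l x * V x) \<le> exp (H + 1 + 1)"
    unfolding S_def V_def by (rule sum_initial_tilted_le[OF eta _ l1 Vb]) (use p in \<open>auto simp: less_imp_le\<close>)
  then have start: "(\<Sum>x\<in>S. \<eta> (fst x) * tilted_coin p l x * V x) \<le> exp (H + 2)" by (simp add: add.commute)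
  have "\<rho>^m = exp (real m * (c * l\<^sup>2))" unfolding \<rho>_def by (simp add: exp_of_nat_mult)
  also have "\<dots> \<le> exp (c * l\<^sup>2 * real (Suc m))" using H0 unfolding c_def by (simp add: algebra_simps)
  finally have rm: "\<rho>^m \<le> exp (c * l\<^sup>2 * real (Suc m))" .
  have "(\<Sum>s\<in>paths S (Suc m). chain_weight \<eta> K (tilted_coin p l) (Suc m) s)
      \<le> exp (H + 1) * (\<rho>^m * (\<Sum>x\<in>S. \<eta> (fst x) * tilted_coin p l x * V x))"
    by (rule sum_path_weight_le_drift) (use a0 P0 ph0 ly Vlow in \<open>auto simp: S_def \<rho>_def\<close>)
  also have "\<dots> \<le> exp (H + 1) * (exp (c * l\<^sup>2 * real (Suc m)) * exp (H + 2))"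
    using rm start a0 ph0 by (intro mult_left_mono mult_mono sum_nonneg) (auto simp: \<rho>_def V_def)
  also have "\<dots> = exp (2 * H + 3) * exp (c * l\<^sup>2 * real (Suc m))"
    by (simp add: exp_add[symmetric] algebra_simps)
  finally show ?thesis unfolding S_def c_def .
qed

lemma path_mgf_bound:
  fixes N :: nat and K :: "nat \<Rightarrow> nat \<Rightarrow> real" and p \<mu> :: "nat \<Rightarrow> real"
  assumes K: "stochastic_matrix N K"
    and U: "unique_closed_irreducible N K"
    and mu: "stationary N K \<mu>"
    and p: "\<forall>i\<in>{1..N}. 0 < p i \<and> p i < 1"
    and pm: "(\<Sum>i\<in>{1..N}. \<mu> i * p i) = 1/2"
  obtains A c l0 where "A > 0" "c > 0" "l0 > 0"
    "\<And>l m \<eta>. \<bar>l\<bar> \<le> l0 \<Longrightarrow> prob_vector N \<eta> \<Longrightarrow>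
       (\<Sum>s\<in>paths ({1..N} \<times> UNIV) (Suc m). chain_weight \<eta> K (tilted_coin p l) (Suc m) s)
         \<le> A * exp (c * l\<^sup>2 * real (Suc m))"
proof -
  define f where "f i = p i - 1/2" for i
  have fc: "(\<Sum>i\<in>{1..N}. \<mu> i * f i) = 0"
  proof -
    have "(\<Sum>i\<in>{1..N}. \<mu> i * f i) = (\<Sum>i\<in>{1..N}. \<mu> i * p i) - (\<Sum>i\<in>{1..N}. \<mu> i) / 2"
      unfolding f_def by (simp add: algebra_simps sum_subtractf sum_divide_distrib)
    then show ?thesis using pm mu unfolding stationary_def prob_vector_def by simp
  qed
  have fb: "\<forall>i\<in>{1..N}. \<bar>f i\<bar> \<le> 1" using p unfolding f_def by force
  obtain H where H0: "H > 0" and Hp: "\<And>\<epsilon>. \<epsilon> > 0 \<Longrightarrow> \<exists>h. (\<forall>i\<in>{1..N}. \<bar>h i\<bar> \<le> H) \<and>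
           (\<forall>i\<in>{1..N}. \<bar>h i - (\<Sum>j\<in>{1..N}. K i j * h j) - f i\<bar> \<le> \<epsilon>)"
    using approx_poisson_solution[OF K U mu fc fb] by blast
  define l0 where "l0 = min 1 (1 / (2 * H))"
  define c where "c = 2 + 4 * H\<^sup>2"
  define A where "A = exp (2 * H + 3)"
  have "(\<Sum>s\<in>paths ({1..N} \<times> UNIV) (Suc m). chain_weight \<eta> K (tilted_coin p l) (Suc m) s)
        \<le> A * exp (c * l\<^sup>2 * real (Suc m))"
    if l: "\<bar>l\<bar> \<le> l0" and eta: "prob_vector N \<eta>" for l m \<eta>
  proof (cases "l = 0")
    case True
    then have "tilted_coin p l = coin_prob p" by (simp add: fun_eq_iff tilted_coin_def)
    then show ?thesis
      using sum_chain_weight_coin_prob[OF K eta, of p m] True H0 unfolding A_def by simp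
  next
    case False
    have l1: "\<bar>l\<bar> \<le> 1" and l2: "\<bar>l\<bar> * (2 * H) \<le> 1"
      using l H0 unfolding l0_def by (auto simp: field_simps)
    obtain h where "\<forall>i\<in>{1..N}. \<bar>h i\<bar> \<le> H"
      and "\<forall>i\<in>{1..N}. \<bar>h i - (\<Sum>j\<in>{1..N}. K i j * h j) - f i\<bar> \<le> \<bar>l\<bar>"
      using Hp[of "\<bar>l\<bar>"] False by auto
    then show ?thesis
      using tilted_path_sum_le[OF K p eta H0 l1 l2] unfolding A_def c_def f_def by blast
  qed
  then show ?thesis
    by (intro that[of A c l0]) (use H0 in \<open>auto simp: A_def c_def l0_def intro: add_pos_nonneg\<close>)
qed

definition centered_successes :: "nat \<Rightarrow> (nat \<Rightarrow> nat \<times> bool) \<Rightarrow> real" where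
  "centered_successes n s = (\<Sum>j\<in>{1..n}. (if snd (s j) then 1 else 0) - 1/2)"

lemma path_weight_tilted: "path_weight a P (tilted_coin p l) n s = path_weight a P (coin_prob p) n s * exp (l * centered_successes n s)"
proof -
  have "(\<Prod>j\<in>{1..n}. tilted_coin p l (s j)) = (\<Prod>j\<in>{1..n}. coin_prob p (s j)) * (\<Prod>j\<in>{1..n}. exp (l * ((if snd (s j) then 1 else 0) - 1/2)))"
    unfolding tilted_coin_def by (rule prod.distrib)
  also have "(\<Prod>j\<in>{1..n}. exp (l * ((if snd (s j) then 1 else 0) - 1/2))) = exp (l * centered_successes n s)"
    unfolding centered_successes_def by (simp add: exp_sum sum_distrib_left)
  finally show ?thesis unfolding path_weight_def by (simp add: mult.assoc)
qed

text \<open>The tilt \<open>t\<close> is the optimiser \<open>d / (2 c M)\<close> of the Gaussian exponent, capped at the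
  radius \<open>l0\<close> where the moment generating function bound holds.\<close>

lemma chernoff_exponent_le:
  fixes c M d l0 :: real
  assumes c: "c > 0" and M: "M > 0" and l0: "l0 > 0"
  defines "t \<equiv> min l0 (d / (2 * c * M))"
  shows "exp (c * t\<^sup>2 * M - t * d) \<le> exp (- (d\<^sup>2 / (4 * c * M))) + exp (- (l0 * d / 2))"
proof (cases "d / (2 * c * M) \<le> l0")
  case True
  then have tt: "t = d / (2 * c * M)" unfolding t_def by simp
  have "c * t\<^sup>2 * M - t * d = - (d\<^sup>2 / (4 * c * M))"
    unfolding tt using c M by (simp add: field_simps power2_eq_square)
  then show ?thesis by (simp add: add_increasing2)
next
  case False
  then have tt: "t = l0" unfolding t_def by simp
  have "2 * c * M * l0 \<le> d" using False c M by (simp add: field_simps)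
  then have "l0 * (2 * c * M * l0) \<le> l0 * d" using l0 by (intro mult_left_mono) auto
  then have "c * l0\<^sup>2 * M \<le> l0 * d / 2" by (simp add: power2_eq_square algebra_simps)
  then have "exp (c * t\<^sup>2 * M - t * d) \<le> exp (- (l0 * d / 2))" unfolding tt by simp
  then show ?thesis by (simp add: add_increasing)
qed

lemma chernoff_path_sum:
  fixes A c l0 d :: real and \<sigma> :: real
  assumes A: "A > 0" and c: "c > 0" and l0: "l0 > 0"
    and mgf: "\<And>l. \<bar>l\<bar> \<le> l0 \<Longrightarrow>
       (\<Sum>s\<in>paths S (Suc m). path_weight a P (tilted_coin p l) (Suc m) s) \<le> A * exp (c * l\<^sup>2 * real (Suc m))"
    and nn: "\<And>s. s \<in> paths S (Suc m) \<Longrightarrow> path_weight a P (coin_prob p) (Suc m) s \<ge> 0"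
    and fin: "finite S"
    and sg: "\<bar>\<sigma>\<bar> = 1" and d: "d > 0"
  shows "(\<Sum>s\<in>{s\<in>paths S (Suc m). \<sigma> * centered_successes (Suc m) s \<ge> d}. path_weight a P (coin_prob p) (Suc m) s)
      \<le> A * (exp (- (d\<^sup>2 / (4 * c * real (Suc m)))) + exp (- (l0 * d / 2)))"
proof -
  define Mm where "Mm = real (Suc m)"
  have Mm: "Mm > 0" unfolding Mm_def by simp
  define t where "t = min l0 (d / (2 * c * Mm))"
  have t0: "t > 0" unfolding t_def using l0 d c Mm by simp
  define l where "l = \<sigma> * t"
  have la: "\<bar>l\<bar> = t" unfolding l_def using sg t0 by (simp add: abs_mult)
  have "(\<Sum>s\<in>{s\<in>paths S (Suc m). \<sigma> * centered_successes (Suc m) s \<ge> d}. path_weight a P (coin_prob p) (Suc m) s)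
      \<le> (\<Sum>s\<in>{s\<in>paths S (Suc m). \<sigma> * centered_successes (Suc m) s \<ge> d}. path_weight a P (tilted_coin p l) (Suc m) s * exp (- (t * d)))"
  proof (rule sum_mono)
    fix s assume s: "s \<in> {s\<in>paths S (Suc m). \<sigma> * centered_successes (Suc m) s \<ge> d}"
    have "t * d \<le> t * (\<sigma> * centered_successes (Suc m) s)" using s t0 by (intro mult_left_mono) auto
    then have "1 \<le> exp (l * centered_successes (Suc m) s) * exp (- (t * d))"
      unfolding l_def by (simp add: exp_add[symmetric] algebra_simps)
    then have "path_weight a P (coin_prob p) (Suc m) s * 1 \<le> path_weight a P (coin_prob p) (Suc m) s * (exp (l * centered_successes (Suc m) s) * exp (- (t * d)))"
      using nn s by (intro mult_left_mono) auto
    then show "path_weight a P (coin_prob p) (Suc m) s \<le> path_weight a P (tilted_coin p l) (Suc m) s * exp (- (t * d))"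
      by (simp add: path_weight_tilted mult.assoc)
  qed
  also have "\<dots> \<le> (\<Sum>s\<in>paths S (Suc m). path_weight a P (tilted_coin p l) (Suc m) s * exp (- (t * d)))"
    by (rule sum_mono2) (use fin finite_paths nn in \<open>auto simp: path_weight_tilted\<close>)
  also have "\<dots> = (\<Sum>s\<in>paths S (Suc m). path_weight a P (tilted_coin p l) (Suc m) s) * exp (- (t * d))"
    by (simp add: sum_distrib_right)
  also have "\<dots> \<le> A * exp (c * t\<^sup>2 * Mm) * exp (- (t * d))"
  proof -
    have l2: "l\<^sup>2 = t\<^sup>2" using la by (metis power2_abs)
    have "t \<le> l0" unfolding t_def by simp
    then have "(\<Sum>s\<in>paths S (Suc m). path_weight a P (tilted_coin p l) (Suc m) s) \<le> A * exp (c * t\<^sup>2 * Mm)"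
      using mgf[of l] la t0 l2 unfolding Mm_def by simp
    then show ?thesis by (intro mult_right_mono) auto
  qed
  also have "\<dots> = A * exp (c * t\<^sup>2 * Mm - t * d)" by (simp add: exp_diff exp_minus field_simps)
  also have "\<dots> \<le> A * (exp (- (d\<^sup>2 / (4 * c * Mm))) + exp (- (l0 * d / 2)))"
    using A chernoff_exponent_le[OF c Mm l0, of d] unfolding t_def by simp
  finally show ?thesis unfolding Mm_def .
qed

definition prefix_cylinder :: "(nat \<Rightarrow> 'a) measure \<Rightarrow> nat \<Rightarrow> (nat \<Rightarrow> 'a) \<Rightarrow> (nat \<Rightarrow> 'a) set" where
  "prefix_cylinder M m s = {\<omega> \<in> space M. \<forall>j\<in>{1..m}. \<omega> j = s j}"

lemma sets_prefix_cylinder: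
  assumes "\<And>j. (\<lambda>\<omega>. \<omega> j) \<in> measurable M (count_space UNIV)"
  shows "prefix_cylinder M m s \<in> sets M"
proof -
  have "{\<omega> \<in> space M. \<omega> j = s j} \<in> sets M" for j
    using measurable_sets[OF assms[of j], of "{s j}"] by (simp add: vimage_def Int_def conj_commute)
  then show ?thesis unfolding prefix_cylinder_def by (intro sets.sets_Collect_finite_All) auto
qed

lemma path_law_prefix:
  assumes "path_law N K p \<eta> M" and "m \<ge> 1"
  shows "measure M {\<omega> \<in> space M. \<forall>j\<in>{1..m}. \<omega> j = (r j, b j)} =
    (if (\<forall>j\<in>{1..m}. r j \<in> {1..N}) then
       \<eta> (r 1) * (\<Prod>j\<in>{1..<m}. K (r j) (r (Suc j))) *
       (\<Prod>j\<in>{1..m}. (if b j then p (r j) else 1 - p (r j)))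
     else 0)"
  using assms unfolding path_law_def by blast

lemma measure_prefix_cylinder:
  assumes pl: "path_law N K p \<eta> M" and s: "s \<in> paths ({1..N} \<times> UNIV) (Suc m)"
  shows "measure M (prefix_cylinder M (Suc m) s) = chain_weight \<eta> K (coin_prob p) (Suc m) s"
proof -
  have "prefix_cylinder M (Suc m) s = {\<omega> \<in> space M. \<forall>j\<in>{1..Suc m}. \<omega> j = (fst (s j), snd (s j))}"
    unfolding prefix_cylinder_def by simp
  moreover have "\<forall>j\<in>{1..Suc m}. fst (s j) \<in> {1..N}" using paths_memD[OF s] by force
  ultimately show ?thesis
    unfolding path_weight_def coin_prob_def
    using path_law_prefix[OF pl, of "Suc m" "\<lambda>j. fst (s j)" "\<lambda>j. snd (s j)"] by simp
qed

text \<open>No measurability of the event is needed: paths whose prefix is not admissible form a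
  null set, since the cylinders over admissible prefixes already have total measure \<open>1\<close>.\<close>

lemma measure_prefix_event_le:
  assumes pl: "path_law N K p \<eta> M" and K: "stochastic_matrix N K" and eta: "prob_vector N \<eta>"
  shows "\<exists>B\<in>sets M. {\<omega>\<in>space M. Q (restrict \<omega> {1..Suc m})} \<subseteq> B \<and>
     measure M B \<le> (\<Sum>s\<in>{s\<in>paths ({1..N} \<times> UNIV) (Suc m). Q s}. chain_weight \<eta> K (coin_prob p) (Suc m) s)"
proof -
  define S where "S = {1..N} \<times> (UNIV :: bool set)"
  define cyl where "cyl = prefix_cylinder M (Suc m)"
  interpret prob_space M using pl unfolding path_law_def by blast
  have cyl_sets: "cyl s \<in> sets M" for s
    unfolding cyl_def by (rule sets_prefix_cylinder) (use pl in \<open>auto simp: path_law_def\<close>)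
  have finPS: "finite (paths S (Suc m))" unfolding S_def by (rule finite_paths) simp
  have disj: "disjoint_family_on cyl (paths S (Suc m))"
    unfolding disjoint_family_on_def cyl_def prefix_cylinder_def
    by (auto dest: paths_eqI)
  define U where "U = (\<Union>s\<in>paths S (Suc m). cyl s)"
  have U: "U \<in> sets M" unfolding U_def using finPS cyl_sets by blast
  have "measure M U = 1"
    using finite_measure_finite_Union[OF finPS _ disj] cyl_sets measure_prefix_cylinder[OF pl]
      sum_chain_weight_coin_prob[OF K eta]
    unfolding U_def S_def cyl_def by auto
  then have null: "measure M (space M - U) = 0" using finite_measure_compl[OF U] prob_space by simp
  define V where "V = (\<Union>s\<in>{s\<in>paths S (Suc m). Q s}. cyl s)"
  have V: "V \<in> sets M" unfolding V_def by (rule sets.finite_UN) (use finPS cyl_sets in auto)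
  have "{\<omega>\<in>space M. Q (restrict \<omega> {1..Suc m})} \<subseteq> V \<union> (space M - U)"
  proof
    fix \<omega> assume w: "\<omega> \<in> {\<omega>\<in>space M. Q (restrict \<omega> {1..Suc m})}"
    show "\<omega> \<in> V \<union> (space M - U)"
    proof (cases "\<omega> \<in> U")
      case True
      then obtain s where s: "s \<in> paths S (Suc m)" "\<omega> \<in> cyl s" unfolding U_def by blast
      have "restrict \<omega> {1..Suc m} = s"
        using s unfolding cyl_def prefix_cylinder_def paths_def by (auto simp: fun_eq_iff PiE_def extensional_def)
      then show ?thesis using w s unfolding V_def by auto
    qed (use w in auto)
  qed
  moreover have "measure M (V \<union> (space M - U)) \<le> (\<Sum>s\<in>{s\<in>paths S (Suc m). Q s}. measure M (cyl s))"
    using measure_Un_le[OF V, of "space M - U"] U null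
      finite_measure_subadditive_finite[of "{s\<in>paths S (Suc m). Q s}" cyl] finPS cyl_sets
    unfolding V_def by fastforce
  moreover have "(\<Sum>s\<in>{s\<in>paths S (Suc m). Q s}. measure M (cyl s))
      = (\<Sum>s\<in>{s\<in>paths S (Suc m). Q s}. chain_weight \<eta> K (coin_prob p) (Suc m) s)"
    using measure_prefix_cylinder[OF pl] unfolding S_def cyl_def by auto
  ultimately show ?thesis using V U unfolding S_def by (intro bexI[of _ "V \<union> (space M - U)"]) auto
qed

lemma centered_successes_tail:
  fixes N :: nat and K :: "nat \<Rightarrow> nat \<Rightarrow> real" and p \<mu> :: "nat \<Rightarrow> real"
  assumes K: "stochastic_matrix N K"
    and U: "unique_closed_irreducible N K"
    and mu: "stationary N K \<mu>"
    and p: "\<forall>i\<in>{1..N}. 0 < p i \<and> p i < 1"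
    and pm: "(\<Sum>i\<in>{1..N}. \<mu> i * p i) = 1/2"
  obtains A c l0 where "A > 0" "c > 0" "l0 > 0"
    "\<And>\<eta> M (\<sigma>::real) d k. prob_vector N \<eta> \<Longrightarrow> path_law N K p \<eta> M \<Longrightarrow> \<bar>\<sigma>\<bar> = 1 \<Longrightarrow> d > 0 \<Longrightarrow>
       \<exists>B\<in>sets M. {\<omega>\<in>space M. \<sigma> * centered_successes (Suc k) (restrict \<omega> {1..Suc k}) \<ge> d} \<subseteq> B \<and>
         measure M B \<le> A * (exp (- (d\<^sup>2 / (4 * c * real (Suc k)))) + exp (- (l0 * d / 2)))"
proof -
  obtain A c l0 where A: "A > 0" and c: "c > 0" and l0: "l0 > 0"
    and mgf: "\<And>l m \<eta>. \<bar>l\<bar> \<le> l0 \<Longrightarrow> prob_vector N \<eta> \<Longrightarrow>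
       (\<Sum>s\<in>paths ({1..N} \<times> UNIV) (Suc m). chain_weight \<eta> K (tilted_coin p l) (Suc m) s)
         \<le> A * exp (c * l\<^sup>2 * real (Suc m))"
    using path_mgf_bound[OF assms] by blast
  show ?thesis
  proof (rule that[OF A c l0])
    fix \<eta> M and \<sigma> d :: real and k
    assume eta: "prob_vector N \<eta>" and pl: "path_law N K p \<eta> M" and sg: "\<bar>\<sigma>\<bar> = 1" and d: "d > 0"
    let ?S = "{1..N} \<times> (UNIV :: bool set)"
    obtain B where B: "B \<in> sets M" "{\<omega>\<in>space M. \<sigma> * centered_successes (Suc k) (restrict \<omega> {1..Suc k}) \<ge> d} \<subseteq> B"
      and mB: "measure M B \<le> (\<Sum>s\<in>{s\<in>paths ?S (Suc k). \<sigma> * centered_successes (Suc k) s \<ge> d}.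
        chain_weight \<eta> K (coin_prob p) (Suc k) s)"
      using measure_prefix_event_le[OF pl K eta, where Q="\<lambda>s. d \<le> \<sigma> * centered_successes (Suc k) s" and m=k]
      by blast
    have "(\<Sum>s\<in>{s\<in>paths ?S (Suc k). \<sigma> * centered_successes (Suc k) s \<ge> d}. chain_weight \<eta> K (coin_prob p) (Suc k) s)
        \<le> A * (exp (- (d\<^sup>2 / (4 * c * real (Suc k)))) + exp (- (l0 * d / 2)))"
    proof (rule chernoff_path_sum[OF A c l0 _ _ _ sg d])
      show "(\<Sum>s\<in>paths ?S (Suc k). chain_weight \<eta> K (tilted_coin p l) (Suc k) s) \<le> A * exp (c * l\<^sup>2 * real (Suc k))"
        if "\<bar>l\<bar> \<le> l0" for l
        by (rule mgf[OF that eta])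
      show "0 \<le> chain_weight \<eta> K (coin_prob p) (Suc k) s" if "s \<in> paths ?S (Suc k)" for s
        by (rule path_weight_nonneg[OF that])
          (use eta K p in \<open>auto simp: prob_vector_def stochastic_matrix_def coin_prob_def less_imp_le\<close>)
    qed simp
    with B mB show "\<exists>B\<in>sets M. {\<omega>\<in>space M. \<sigma> * centered_successes (Suc k) (restrict \<omega> {1..Suc k}) \<ge> d} \<subseteq> B \<and>
         measure M B \<le> A * (exp (- (d\<^sup>2 / (4 * c * real (Suc k)))) + exp (- (l0 * d / 2)))"
      by (meson order_trans)
  qed
qed

definition successes :: "(nat \<Rightarrow> nat \<times> bool) \<Rightarrow> nat \<Rightarrow> nat" where
  "successes \<omega> k = card {j \<in> {1..k}. xi \<omega> j}"

lemma F_0: "F \<omega> 0 = 0"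
  unfolding F_def by (rule Least_eq_0) simp

lemma sum_Gt_minus_one: "(\<Sum>j\<in>{1..n}. (Gt \<omega> j - 1)) = real (F \<omega> n) - real n"
  by (induction n) (simp_all add: F_0 Gt_def)

lemma successes_Suc_le: "successes \<omega> (Suc k) \<le> successes \<omega> k + 1"
proof -
  have "{j \<in> {1..Suc k}. xi \<omega> j} \<subseteq> insert (Suc k) {j \<in> {1..k}. xi \<omega> j}" by auto
  then have "card {j \<in> {1..Suc k}. xi \<omega> j} \<le> card (insert (Suc k) {j \<in> {1..k}. xi \<omega> j})"
    by (intro card_mono) auto
  also have "\<dots> \<le> card {j \<in> {1..k}. xi \<omega> j} + 1" by (simp add: card_insert_if)
  finally show ?thesis unfolding successes_def .
qed

lemma successes_le: "successes \<omega> k \<le> k"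
  unfolding successes_def by (metis (no_types, lifting) card_atLeastAtMost card_mono diff_Suc_1 finite_atLeastAtMost mem_Collect_eq subsetI)

lemma successes_mono: "k \<le> k' \<Longrightarrow> successes \<omega> k \<le> successes \<omega> k'"
  unfolding successes_def by (intro card_mono) auto

lemma successes_hits: "n \<le> successes \<omega> (t + n) \<Longrightarrow> \<exists>k\<le>t. successes \<omega> (k + n) = n"
proof (induction t)
  case 0
  then show ?case using successes_le[of \<omega> n] by auto
next
  case (Suc t)
  show ?case
  proof (cases "n \<le> successes \<omega> (t + n)")
    case True then show ?thesis using Suc.IH by (meson le_SucI)
  next
    case False
    then have "successes \<omega> (Suc t + n) = n" using Suc.prems successes_Suc_le[of \<omega> "t + n"] by simp
    then show ?thesis by blast
  qed
qed

lemma F_le_if_successes: "n \<le> successes \<omega> (t + n) \<Longrightarrow> F \<omega> n \<le> t"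
proof -
  assume "n \<le> successes \<omega> (t + n)"
  then obtain k where k: "k \<le> t" "successes \<omega> (k + n) = n" using successes_hits by blast
  then have "F \<omega> n \<le> k" unfolding F_def successes_def by (intro Least_le) simp
  then show ?thesis using k by simp
qed

lemma successes_ge_if_F_le:
  assumes "n \<le> successes \<omega> (t + n)" and "F \<omega> n + n \<le> m"
  shows "n \<le> successes \<omega> m"
proof -
  obtain k where "successes \<omega> (k + n) = n" using successes_hits[OF assms(1)] by blast
  then have "successes \<omega> (F \<omega> n + n) = n" unfolding F_def successes_def by (rule LeastI)
  then show ?thesis using successes_mono[OF assms(2), of \<omega>] by simp
qed

lemma centered_successes_restrict:
  "centered_successes m (restrict \<omega> {1..m}) = real (successes \<omega> m) - real m / 2"
proof -
  have "(\<Sum>j\<in>{1..m}. (if xi \<omega> j then 1 else 0::real)) = real (successes \<omega> m)"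
    unfolding successes_def by (simp add: sum.If_cases Int_def conj_commute)
  then show ?thesis unfolding centered_successes_def xi_def by (simp add: sum_subtractf)
qed

lemma chernoff_tail_le:
  fixes A c l0 C' m Mx y :: real
  assumes A: "A > 0" and c: "c > 0" and l0: "l0 > 0" and C': "C' = min (1 / (32 * c)) (l0 / 4)"
    and m: "0 < m" "m \<le> 2 * Mx" and y: "y > 0"
  shows "A * (exp (- ((y/2)\<^sup>2 / (4 * c * m))) + exp (- (l0 * (y/2) / 2)))
      \<le> A * (exp (- C' * y\<^sup>2 / Mx) + exp (- C' * y))"
proof -
  have "C' * y\<^sup>2 / Mx \<le> (1 / (32 * c)) * y\<^sup>2 / Mx"
    using m C' by (intro divide_right_mono mult_right_mono) auto
  also have "\<dots> = y\<^sup>2 / (32 * c * Mx)" by simp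
  also have "\<dots> \<le> y\<^sup>2 / (16 * c * m)"
    using c m by (intro divide_left_mono) (auto intro: mult_pos_pos)
  also have "\<dots> = (y/2)\<^sup>2 / (4 * c * m)" by (simp add: power2_eq_square)
  finally have e1: "exp (- ((y/2)\<^sup>2 / (4 * c * m))) \<le> exp (- C' * y\<^sup>2 / Mx)" by simp
  have "C' * y \<le> (l0 / 4) * y" using C' y by (intro mult_right_mono) auto
  then have e2: "exp (- (l0 * (y/2) / 2)) \<le> exp (- C' * y)" by simp
  show ?thesis using e1 e2 A by (intro mult_left_mono add_mono) auto
qed

text \<open>\<open>F\<^sub>n > n + y\<close> means fewer than \<open>n\<close> successes among the first \<open>\<lfloor>2n + y\<rfloor>\<close> trials,
  and \<open>F\<^sub>n < n - y\<close> means at least \<open>n\<close> among the first \<open>\<lfloor>2n - y\<rfloor>\<close>.\<close>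

lemma sum_Gt_deviation_cases:
  fixes y :: real
  assumes dev: "\<bar>\<Sum>j\<in>{1..n}. (Gt \<omega> j - 1)\<bar> > y" and y: "y \<ge> 1"
  defines "t \<equiv> nat \<lfloor>real n + y\<rfloor>" and "m \<equiv> nat \<lfloor>2 * real n - y\<rfloor>"
  shows "centered_successes (t + n) (restrict \<omega> {1..t + n}) \<le> - (y/2)
    \<or> (y < real n \<and> centered_successes m (restrict \<omega> {1..m}) \<ge> y/2)"
proof (cases "n \<le> successes \<omega> (t + n)")
  case hit: True
  have t: "real t \<le> real n + y" unfolding t_def using y by linarith
  have "F \<omega> n \<le> t" by (rule F_le_if_successes[OF hit])
  then have low: "real (F \<omega> n) - real n < - y" using dev t unfolding sum_Gt_minus_one by linarith
  then have yn: "y < real n" by linarith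
  have "F \<omega> n + n \<le> m" using low unfolding m_def by linarith
  then have "n \<le> successes \<omega> m" by (rule successes_ge_if_F_le[OF hit])
  moreover have "real m \<le> 2 * real n - y" unfolding m_def using yn by linarith
  ultimately show ?thesis using yn unfolding centered_successes_restrict by (simp add: field_simps)
next
  case False
  moreover have "real n + y - 1 < real t" unfolding t_def using y by linarith
  ultimately show ?thesis unfolding centered_successes_restrict by (simp add: field_simps)
qed

lemma sum_Gt_deviation_le:
  fixes A c l0 y :: real and M :: "(nat \<Rightarrow> nat \<times> bool) measure"
  assumes M: "prob_space M" and A: "A > 0" and c: "c > 0" and l0: "l0 > 0"
    and tail: "\<And>\<sigma> d k. \<bar>\<sigma>\<bar> = 1 \<Longrightarrow> d > 0 \<Longrightarrow>
       \<exists>B\<in>sets M. {\<omega>\<in>space M. \<sigma> * centered_successes (Suc k) (restrict \<omega> {1..Suc k}) \<ge> d} \<subseteq> B \<and>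
         measure M B \<le> A * (exp (- (d\<^sup>2 / (4 * c * real (Suc k)))) + exp (- (l0 * d / 2)))"
    and n: "n \<ge> 1" and y: "y \<ge> 1"
  defines "C' \<equiv> min (1 / (32 * c)) (l0 / 4)"
  shows "measure M {\<omega> \<in> space M. \<bar>\<Sum>j\<in>{1..n}. (Gt \<omega> j - 1)\<bar> > y}
    \<le> (2 * A) * (exp (- C' * y\<^sup>2 / max y (8 * real n)) + exp (- C' * y))"
proof -
  interpret prob_space M by (rule M)
  define Mx where "Mx = max y (8 * real n)"
  define T where "T = exp (- C' * y\<^sup>2 / Mx) + exp (- C' * y)"
  define E where "E = {\<omega> \<in> space M. \<bar>\<Sum>j\<in>{1..n}. (Gt \<omega> j - 1)\<bar> > y}"
  have tailT: "\<exists>B\<in>sets M. {\<omega>\<in>space M. \<sigma> * centered_successes m (restrict \<omega> {1..m}) \<ge> y/2} \<subseteq> B \<and>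
      measure M B \<le> A * T"
    if "\<bar>\<sigma>\<bar> = 1" "0 < m" "real m \<le> 2 * Mx" for \<sigma> m
  proof -
    obtain k where m: "m = Suc k" using \<open>0 < m\<close> gr0_implies_Suc by blast
    obtain B where B: "B \<in> sets M"
      "{\<omega>\<in>space M. \<sigma> * centered_successes m (restrict \<omega> {1..m}) \<ge> y/2} \<subseteq> B"
      and mB: "measure M B \<le> A * (exp (- ((y/2)\<^sup>2 / (4 * c * real m))) + exp (- (l0 * (y/2) / 2)))"
      using tail[OF \<open>\<bar>\<sigma>\<bar> = 1\<close>, of "y/2" k] y unfolding m by auto
    have "A * (exp (- ((y/2)\<^sup>2 / (4 * c * real m))) + exp (- (l0 * (y/2) / 2))) \<le> A * T"
      unfolding T_def by (rule chernoff_tail_le[OF A c l0 C'_def[THEN meta_eq_to_obj_eq]]) (use that y in auto)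
    with mB have "measure M B \<le> A * T" by linarith
    with B show ?thesis by blast
  qed
  define t where "t = nat \<lfloor>real n + y\<rfloor>"
  define m where "m = nat \<lfloor>2 * real n - y\<rfloor>"
  have t: "real t \<le> real n + y" unfolding t_def using y by linarith
  obtain B1 where B1: "B1 \<in> sets M"
    "{\<omega>\<in>space M. (-1) * centered_successes (t + n) (restrict \<omega> {1..t + n}) \<ge> y/2} \<subseteq> B1"
    and mB1: "measure M B1 \<le> A * T"
    using tailT[of "-1" "t + n"] n t unfolding Mx_def by force
  have cases: "\<omega> \<in> B1 \<or> (y < real n \<and> 1 * centered_successes m (restrict \<omega> {1..m}) \<ge> y/2)"
    if "\<omega> \<in> E" for \<omega>
    using sum_Gt_deviation_cases[where y=y and n=n and \<omega>=\<omega>] that y B1 unfolding E_def t_def m_def by force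
  have "measure M E \<le> (2 * A) * T"
  proof (cases "y < real n")
    case True
    then have m: "real m \<le> 2 * real n - y" "n \<le> m" unfolding m_def by linarith+
    obtain B2 where B2: "B2 \<in> sets M"
      "{\<omega>\<in>space M. 1 * centered_successes m (restrict \<omega> {1..m}) \<ge> y/2} \<subseteq> B2"
      and mB2: "measure M B2 \<le> A * T"
      using tailT[of 1 m] n m y unfolding Mx_def by force
    have "E \<subseteq> B1 \<union> B2" using cases B2 unfolding E_def by blast
    then have "measure M E \<le> measure M B1 + measure M B2"
      using B1 B2 by (meson finite_measure_mono measure_Un_le order_trans sets.Un)
    then show ?thesis using mB1 mB2 by simp
  next
    case False
    then have "E \<subseteq> B1" using cases by blast
    then have "measure M E \<le> A * T" using B1 mB1 by (meson finite_measure_mono order_trans)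
    also have "\<dots> \<le> (2 * A) * T" using A unfolding T_def by (simp add: add_nonneg_nonneg)
    finally show ?thesis .
  qed
  then show ?thesis unfolding E_def T_def Mx_def .
qed

theorem lemmaA1:
  fixes N :: nat and K :: "nat \<Rightarrow> nat \<Rightarrow> real" and p \<mu> :: "nat \<Rightarrow> real"
  assumes "stochastic_matrix N K"
    and "unique_closed_irreducible N K"
    and "stationary N K \<mu>"
    and "\<forall>i\<in>{1..N}. 0 < p i \<and> p i < 1"
    and "(\<Sum>i\<in>{1..N}. \<mu> i * p i) = 1/2"
  shows "\<exists>C C' y0. C > 0 \<and> C' > 0 \<and>
    (\<forall>n::nat. \<forall>y::real. \<forall>\<eta>. \<forall>M. n \<ge> 1 \<longrightarrow> y \<ge> y0 \<longrightarrow> prob_vector N \<eta> \<longrightarrow>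
       path_law N K p \<eta> M \<longrightarrow>
       measure M {\<omega> \<in> space M. \<bar>\<Sum>j\<in>{1..n}. (Gt \<omega> j - 1)\<bar> > y}
         \<le> C * (exp (- C' * y\<^sup>2 / max y (8 * real n)) + exp (- C' * y)))"
proof -
  obtain A c l0 where A: "A > 0" and c: "c > 0" and l0: "l0 > 0"
    and tail: "\<And>\<eta> M \<sigma> d k. prob_vector N \<eta> \<Longrightarrow> path_law N K p \<eta> M \<Longrightarrow> \<bar>\<sigma>\<bar> = 1 \<Longrightarrow> d > 0 \<Longrightarrow>
       \<exists>B\<in>sets M. {\<omega>\<in>space M. \<sigma> * centered_successes (Suc k) (restrict \<omega> {1..Suc k}) \<ge> d} \<subseteq> B \<and>
         measure M B \<le> A * (exp (- (d\<^sup>2 / (4 * c * real (Suc k)))) + exp (- (l0 * d / 2)))"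
    using centered_successes_tail[OF assms] by blast
  define C' where "C' = min (1 / (32 * c)) (l0 / 4)"
  have "C' > 0" unfolding C'_def using c l0 by simp
  moreover have "measure M {\<omega> \<in> space M. \<bar>\<Sum>j\<in>{1..n}. (Gt \<omega> j - 1)\<bar> > y}
      \<le> (2 * A) * (exp (- C' * y\<^sup>2 / max y (8 * real n)) + exp (- C' * y))"
    if "n \<ge> 1" "y \<ge> 1" "prob_vector N \<eta>" "path_law N K p \<eta> M" for n y \<eta> M
    unfolding C'_def using that
    by (intro sum_Gt_deviation_le[OF _ A c l0 tail]) (auto simp: path_law_def)
  ultimately show ?thesis using A by (intro exI[of _ "2 * A"] exI[of _ C'] exI[of _ 1]) auto
qed

end
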